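(* For $k\ge0$ let $(\mathfrak{S}Sym)^k$ be the span of $\{\mathcal{M}_u:u\in\mathfrak{S}^k\}$, where $\mathfrak{S}^0=\mathfrak{S}_0$ and, for $k\ge1$, $\mathfrak{S}^k=\bigsqcup_{n\ge1}\{u\in\mathfrak{S}_n: \#\mathrm{GDes}(u)=k-1\}$. Then $\mathfrak{S}Sym=\bigoplus_{k\ge0}(\mathfrak{S}Sym)^k$ is a coalgebra grading, i.e. $\Delta((\mathfrak{S}Sym)^k)\subseteq\bigoplus_{i=0}^k(\mathfrak{S}Sym)^i\otimes(\mathfrak{S}Sym)^{k-i}$, and with this grading $\mathfrak{S}Sym$ is isomorphic as a graded coalgebra to the cofree graded coalgebra $Q(V)$ on $V=(\mathfrak{S}Sym)^1$.
   Context: Permutations in one-line notation, product is composition; $\mathfrak{S}_0$ has one element. $\mathrm{GDes}(u)=\{p\in[n-1]:u_i>u_j\text{ for all }i\le p<j\}$. $\mathrm{st}(a_1,\ldots,a_m)\in\mathfrak{S}_m$ is the permutation with the same relative order as the distinct integers $a_i$; $u\times v\in\mathfrak{S}_{p+q}$ for $u\in\mathfrak{S}_p,v\in\mathfrak{S}_q$ has $(u\times v)(i)=u_i$ ($i\le p$), $(u\times v)(p+j)=p+v_j$. $\mathfrak{S}Sym$ is the Hopf algebra over $\mathbb{Q}$ with basis $\{\mathcal{F}_u:u\in\mathfrak{S}_n,n\ge0\}$, product $\mathcal{F}_u\cdot\mathcal{F}_v=\sum_\zeta\mathcal{F}_{(u\times v)\zeta^{-1}}$ over $\zeta\in\mathfrak{S}_{p+q}$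 increasing on $[1,p]$ and on $[p+1,p+q]$, coproduct $\Delta(\mathcal{F}_u)=\sum_{p=0}^n\mathcal{F}_{\mathrm{st}(u_1..u_p)}\otimes\mathcal{F}_{\mathrm{st}(u_{p+1}..u_n)}$. Weak order: $u\le v$ iff $\mathrm{Inv}(u)\subseteq\mathrm{Inv}(v)$, $\mathrm{Inv}(u)=\{(i,j):i<j,u_i>u_j\}$; Möbius function $\mu$. $\mathcal{M}_u=\sum_{v\ge u}\mu(u,v)\mathcal{F}_v$. For a vector space $V$, $Q(V)=\bigoplus_{k\ge0}V^{\otimes k}$ graded by $k$, with deconcatenation coproduct $\Delta(v_1\otimes\cdots\otimes v_k)=\sum_{i=0}^k(v_1\otimes\cdots\otimes v_i)\otimes(v_{i+1}\otimes\cdots\otimes v_k)$ and counit vanishing on $V^{\otimes k}$, $k\ge1$. *)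

theory Defs
  imports Complex_Main "HOL-Library.Function_Algebras"
begin

text \<open>A permutation in S_n is represented by its one-line notation, a list
  [u_1, ..., u_n] of naturals that is a rearrangement of 1..n.  The empty list
  is the unique element of S_0.  List indices are 0-based, so u_i is u ! (i - 1).\<close>

definition is_perm :: "nat list \<Rightarrow> bool" where
  "is_perm u \<longleftrightarrow> distinct u \<and> set u = {1..length u}"

definition Inv :: "nat list \<Rightarrow> (nat \<times> nat) set" where
  "Inv u = {(i, j). 1 \<le> i \<and> i < j \<and> j \<le> length u \<and> u ! (i - 1) > u ! (j - 1)}"

definition weak_le :: "nat list \<Rightarrow> nat list \<Rightarrow> bool" where
  "weak_le u v \<longleftrightarrow> is_perm u \<and> is_perm v \<and> length u = length v \<and> Inv u \<subseteq> Inv v"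

definition weak_lt :: "nat list \<Rightarrow> nat list \<Rightarrow> bool" where
  "weak_lt u v \<longleftrightarrow> weak_le u v \<and> u \<noteq> v"

text \<open>The recursion is run with a fuel parameter; the fuel fact n + 1 used in
  mobius exceeds the length of every strict chain in S_n, so it never runs out.\<close>
fun mob_aux :: "nat \<Rightarrow> nat list \<Rightarrow> nat list \<Rightarrow> int" where
  "mob_aux 0 u v = 0"
| "mob_aux (Suc m) u v =
     (if u = v \<and> is_perm u then 1
      else if weak_lt u v then - (\<Sum>w\<in>{w. weak_le u w \<and> weak_lt w v}. mob_aux m u w)
      else 0)"

definition mobius :: "nat list \<Rightarrow> nat list \<Rightarrow> int" where
  "mobius u v = mob_aux (fact (length v) + 1) u v"

definition GDes :: "nat list \<Rightarrow> nat set" where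
  "GDes u = {p. 1 \<le> p \<and> p \<le> length u - 1 \<and>
     (\<forall>i j. 1 \<le> i \<and> i \<le> p \<and> p < j \<and> j \<le> length u \<longrightarrow> u ! (i - 1) > u ! (j - 1))}"

definition st :: "nat list \<Rightarrow> nat list" where
  "st a = map (\<lambda>x. card {y \<in> set a. y \<le> x}) a"

text \<open>Elements of SSym are finitely supported functions from permutations to Q:
  f stands for sum_u f(u) F_u.  Elements of SSym (x) SSym are finitely
  supported functions on pairs of permutations (the basis F_u (x) F_v).\<close>

definition fsupp :: "('a \<Rightarrow> rat) \<Rightarrow> 'a set" where
  "fsupp f = {x. f x \<noteq> 0}"

definition SSym :: "(nat list \<Rightarrow> rat) set" where
  "SSym = {f. finite (fsupp f) \<and> (\<forall>u \<in> fsupp f. is_perm u)}"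

definition scal :: "rat \<Rightarrow> ('a \<Rightarrow> rat) \<Rightarrow> ('a \<Rightarrow> rat)" where
  "scal c f = (\<lambda>x. c * f x)"

definition lspan :: "('a \<Rightarrow> rat) set \<Rightarrow> ('a \<Rightarrow> rat) set" where
  "lspan S = {x. \<exists>T c. finite T \<and> T \<subseteq> S \<and> x = (\<Sum>v\<in>T. scal (c v) v)}"

definition tensor :: "('a \<Rightarrow> rat) \<Rightarrow> ('b \<Rightarrow> rat) \<Rightarrow> ('a \<times> 'b \<Rightarrow> rat)" where
  "tensor f g = (\<lambda>(x, y). f x * g y)"

definition tensor_sp :: "('a \<Rightarrow> rat) set \<Rightarrow> ('b \<Rightarrow> rat) set \<Rightarrow> ('a \<times> 'b \<Rightarrow> rat) set" where
  "tensor_sp A B = lspan {tensor a b | a b. a \<in> A \<and> b \<in> B}"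

definition FF :: "nat list \<Rightarrow> (nat list \<Rightarrow> rat)" where
  "FF u = (\<lambda>v. if v = u then 1 else 0)"

definition DeltaF :: "nat list \<Rightarrow> (nat list \<times> nat list \<Rightarrow> rat)" where
  "DeltaF u = (\<Sum>p\<in>{0..length u}. tensor (FF (st (take p u))) (FF (st (drop p u))))"

definition Delta :: "(nat list \<Rightarrow> rat) \<Rightarrow> (nat list \<times> nat list \<Rightarrow> rat)" where
  "Delta f = (\<Sum>u\<in>fsupp f. scal (f u) (DeltaF u))"

definition counit :: "(nat list \<Rightarrow> rat) \<Rightarrow> rat" where
  "counit f = f []"

definition MM :: "nat list \<Rightarrow> (nat list \<Rightarrow> rat)" where
  "MM u = (\<Sum>v\<in>{v. weak_le u v}. scal (of_int (mobius u v)) (FF v))"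

definition Sk :: "nat \<Rightarrow> nat list set" where
  "Sk k = (if k = 0 then {[]}
           else {u. is_perm u \<and> 1 \<le> length u \<and> card (GDes u) = k - 1})"

definition SSymk :: "nat \<Rightarrow> (nat list \<Rightarrow> rat) set" where
  "SSymk k = lspan (MM ` Sk k)"

text \<open>Q(V), for a subspace V of SSym, is realised inside the tensor algebra
  T(SSym) = (+)_k SSym^{(x)k}, whose elements are finitely supported functions
  on words of permutations (basis F_{w_1} (x) ... (x) F_{w_k}).\<close>

definition tpow :: "(nat list \<Rightarrow> rat) list \<Rightarrow> (nat list list \<Rightarrow> rat)" where
  "tpow vs = (\<lambda>w. if length w = length vs then (\<Prod>i<length vs. (vs ! i) (w ! i)) else 0)"

definition Vpow :: "(nat list \<Rightarrow> rat) set \<Rightarrow> nat \<Rightarrow> (nat list list \<Rightarrow> rat) set" where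
  "Vpow V k = lspan {tpow vs | vs. length vs = k \<and> set vs \<subseteq> V}"

definition QV :: "(nat list \<Rightarrow> rat) set \<Rightarrow> (nat list list \<Rightarrow> rat) set" where
  "QV V = lspan (\<Union>k. Vpow V k)"

text \<open>Deconcatenation coproduct: Delta(w) = sum_i w_1..w_i (x) w_{i+1}..w_k on
  basis words, i.e. the coefficient of (w1, w2) in Delta(g) is g(w1 @ w2).
  Counit: coefficient of the empty word.\<close>
definition DeltaQ :: "(nat list list \<Rightarrow> rat) \<Rightarrow> (nat list list \<times> nat list list \<Rightarrow> rat)" where
  "DeltaQ g = (\<lambda>(w1, w2). g (w1 @ w2))"

definition counitQ :: "(nat list list \<Rightarrow> rat) \<Rightarrow> rat" where
  "counitQ g = g []"

definition tensor_map :: "((nat list \<Rightarrow> rat) \<Rightarrow> (nat list list \<Rightarrow> rat))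
    \<Rightarrow> (nat list \<times> nat list \<Rightarrow> rat) \<Rightarrow> (nat list list \<times> nat list list \<Rightarrow> rat)" where
  "tensor_map phi t = (\<Sum>(a, b)\<in>fsupp t. scal (t (a, b)) (tensor (phi (FF a)) (phi (FF b))))"

end

(*
  Every permutation w is uniquely a skew sum w_1 \<ominus> ... \<ominus> w_k of skew-indecomposable
  permutations, cut at its global descents; so S^k consists of the permutations with k blocks and
  S^1 of the indecomposable ones. Let Phi be the linear map with
  Phi(F_u) = sum over w >= u of M_{w_1} (x) ... (x) M_{w_k}. By Moebius inversion
  Phi(M_w) = M_{w_1} (x) ... (x) M_{w_k}; these tensors are triangular, hence independent, so Phi
  is injective, and it maps (SSym)^k onto V^(x)k, whence the direct sum decomposition.
  Phi commutes with the coproducts because v <= a \<ominus> b holds iff the standardized prefix and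
  suffix of v lie below a and b: both (Phi (x) Phi)(Delta F_u) and Delta_Q(Phi F_u) become the
  sum of Phi(M_a) (x) Phi(M_b) over the pairs with u <= a \<ominus> b. Likewise
  Delta(M_u) is the sum of M_a (x) M_b over a \<ominus> b = u, which gives the coalgebra grading.
*)

theory Submission
  imports Defs
begin

section \<open>Skew sums and standardization\<close>

definition skew_sum :: "nat list \<Rightarrow> nat list \<Rightarrow> nat list" (infixr \<open>\<ominus>\<close> 65) where
  "a \<ominus> b = map (\<lambda>x. x + length b) a @ b"

lemma length_skew_sum [simp]: "length (a \<ominus> b) = length a + length b"
  by (simp add: skew_sum_def)

lemma nth_skew_sum_left: "i < length a \<Longrightarrow> (a \<ominus> b) ! i = a ! i + length b"
  by (simp add: skew_sum_def nth_append)

lemma nth_skew_sum_right: "length a \<le> i \<Longrightarrow> (a \<ominus> b) ! i = b ! (i - length a)"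
  by (simp add: skew_sum_def nth_append)

lemma skew_sum_Nil_left [simp]: "[] \<ominus> b = b"
  by (simp add: skew_sum_def)

lemma skew_sum_Nil_right [simp]: "a \<ominus> [] = a"
  by (simp add: skew_sum_def)

lemma skew_sum_assoc: "(a \<ominus> b) \<ominus> c = a \<ominus> (b \<ominus> c)"
  by (simp add: skew_sum_def add.assoc)

lemma is_perm_Nil [simp]: "is_perm []"
  by (simp add: is_perm_def)

lemma is_perm_nth_bounds: "is_perm u \<Longrightarrow> i < length u \<Longrightarrow> 1 \<le> u ! i \<and> u ! i \<le> length u"
  unfolding is_perm_def using nth_mem by fastforce

lemma is_perm_skew_sum:
  assumes "is_perm a" "is_perm b"
  shows "is_perm (a \<ominus> b)"
proof -
  have "set (map (\<lambda>x. x + length b) a) = {length b + 1..length b + length a}"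
    "distinct (map (\<lambda>x. x + length b) a)"
    using assms(1) by (auto simp: is_perm_def distinct_map inj_on_def add.commute)
  then show ?thesis
    using assms(2) by (auto simp: is_perm_def skew_sum_def)
qed

lemma finite_perms_length_le: "finite {u. is_perm u \<and> length u \<le> n}"
proof (rule finite_subset)
  show "{u. is_perm u \<and> length u \<le> n} \<subseteq> {xs. set xs \<subseteq> {1..n} \<and> length xs \<le> n}"
    unfolding is_perm_def by auto
qed (rule finite_lists_length_le, simp)

lemma length_st [simp]: "length (st l) = length l"
  by (simp add: st_def)

lemma st_nth:
  assumes "distinct l" "i < length l"
  shows "st l ! i = card {j. j < length l \<and> l ! j \<le> l ! i}"
proof -
  have "{y \<in> set l. y \<le> l ! i} = (\<lambda>j. l ! j) ` {j. j < length l \<and> l ! j \<le> l ! i}"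
    by (auto simp: in_set_conv_nth)
  moreover have "inj_on (\<lambda>j. l ! j) {j. j < length l \<and> l ! j \<le> l ! i}"
    using assms(1) by (auto simp: inj_on_def nth_eq_iff_index_eq)
  ultimately show ?thesis
    using assms by (simp add: st_def card_image)
qed

lemma st_less_iff:
  assumes "distinct l" "i < length l" "j < length l"
  shows "st l ! i < st l ! j \<longleftrightarrow> l ! i < l ! j"
proof
  assume less: "l ! i < l ! j"
  have "{k. k < length l \<and> l ! k \<le> l ! i} \<subseteq> {k. k < length l \<and> l ! k \<le> l ! j}"
    using less by (auto intro: order_trans)
  moreover have "j \<in> {k. k < length l \<and> l ! k \<le> l ! j}" "j \<notin> {k. k < length l \<and> l ! k \<le> l ! i}"
    using less assms(3) by auto
  ultimately have "{k. k < length l \<and> l ! k \<le> l ! i} \<subset> {k. k < length l \<and> l ! k \<le> l ! j}"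
    by blast
  then have "card {k. k < length l \<and> l ! k \<le> l ! i} < card {k. k < length l \<and> l ! k \<le> l ! j}"
    by (rule psubset_card_mono[rotated]) simp
  then show "st l ! i < st l ! j"
    using assms by (simp only: st_nth)
next
  assume st_less: "st l ! i < st l ! j"
  show "l ! i < l ! j"
  proof (rule ccontr)
    assume "\<not> l ! i < l ! j"
    then have "{k. k < length l \<and> l ! k \<le> l ! j} \<subseteq> {k. k < length l \<and> l ! k \<le> l ! i}"
      by (auto intro: order_trans)
    then have "card {k. k < length l \<and> l ! k \<le> l ! j} \<le> card {k. k < length l \<and> l ! k \<le> l ! i}"
      by (rule card_mono[rotated]) simp
    then show False
      using st_less assms by (simp only: st_nth)
  qed
qed

lemma is_perm_st:
  assumes "distinct l"
  shows "is_perm (st l)"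
proof -
  have distinct: "distinct (st l)"
    unfolding distinct_conv_nth
    using st_less_iff[OF assms] assms by (metis length_st nat_neq_iff nth_eq_iff_index_eq)
  have "set (st l) \<subseteq> {1..length l}"
  proof
    fix y assume "y \<in> set (st l)"
    then obtain i where i: "i < length l" "y = st l ! i"
      by (auto simp: in_set_conv_nth)
    have "1 \<le> card {j. j < length l \<and> l ! j \<le> l ! i}"
      using card_mono[of "{j. j < length l \<and> l ! j \<le> l ! i}" "{i}"] i(1) by simp
    moreover have "card {j. j < length l \<and> l ! j \<le> l ! i} \<le> card {..<length l}"
      by (rule card_mono) auto
    ultimately show "y \<in> {1..length l}"
      using i assms by (simp add: st_nth)
  qed
  moreover have "card (set (st l)) = length l"
    using distinct distinct_card by fastforce
  ultimately show ?thesis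
    using distinct by (simp add: is_perm_def card_subset_eq)
qed

lemma st_shifted:
  assumes "distinct l" "set l = {q + 1..q + length l}"
  shows "st l = map (\<lambda>x. x - q) l"
proof (rule nth_equalityI)
  fix i assume i: "i < length (st l)"
  then have li: "l ! i \<in> {q + 1..q + length l}"
    using assms(2) nth_mem by (metis length_st)
  have "{y \<in> set l. y \<le> l ! i} = {q + 1..l ! i}"
    using assms(2) li by auto
  then show "st l ! i = map (\<lambda>x. x - q) l ! i"
    using i li by (simp add: st_def)
qed simp

lemma st_perm: "is_perm u \<Longrightarrow> st u = u"
  using st_shifted[of u 0] by (simp add: is_perm_def)

lemma is_perm_st_take: "is_perm u \<Longrightarrow> is_perm (st (take p u))"
  by (rule is_perm_st) (simp add: is_perm_def)

lemma is_perm_st_drop: "is_perm u \<Longrightarrow> is_perm (st (drop p u))"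
  by (rule is_perm_st) (simp add: is_perm_def)

section \<open>The weak order\<close>

lemma Inv_subset_iff:
  "Inv u \<subseteq> Inv v \<longleftrightarrow>
     (\<forall>i j. i < j \<longrightarrow> j < length u \<longrightarrow> u ! j < u ! i \<longrightarrow> j < length v \<and> v ! j < v ! i)"
proof
  assume sub: "Inv u \<subseteq> Inv v"
  show "\<forall>i j. i < j \<longrightarrow> j < length u \<longrightarrow> u ! j < u ! i \<longrightarrow> j < length v \<and> v ! j < v ! i"
  proof (intro allI impI)
    fix i j assume "i < j" "j < length u" "u ! j < u ! i"
    then have "(Suc i, Suc j) \<in> Inv u"
      by (simp add: Inv_def)
    then have "(Suc i, Suc j) \<in> Inv v"
      using sub by blast
    then show "j < length v \<and> v ! j < v ! i"
      by (simp add: Inv_def)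
  qed
next
  assume H: "\<forall>i j. i < j \<longrightarrow> j < length u \<longrightarrow> u ! j < u ! i \<longrightarrow> j < length v \<and> v ! j < v ! i"
  show "Inv u \<subseteq> Inv v"
  proof
    fix x assume "x \<in> Inv u"
    then obtain i j where x: "x = (i, j)" "1 \<le> i" "i < j" "j \<le> length u" "u ! (i - 1) > u ! (j - 1)"
      by (auto simp: Inv_def)
    then have "j - 1 < length v \<and> v ! (j - 1) < v ! (i - 1)"
      using H[rule_format, of "i - 1" "j - 1"] by auto
    then show "x \<in> Inv v"
      using x by (auto simp: Inv_def)
  qed
qed

lemma weak_le_iff:
  "weak_le u v \<longleftrightarrow> is_perm u \<and> is_perm v \<and> length u = length v \<and>
     (\<forall>i j. i < j \<longrightarrow> j < length u \<longrightarrow> u ! j < u ! i \<longrightarrow> v ! j < v ! i)"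
  unfolding weak_le_def Inv_subset_iff by auto

lemma weak_le_refl: "is_perm u \<Longrightarrow> weak_le u u"
  by (simp add: weak_le_def)

lemma weak_le_trans: "weak_le u v \<Longrightarrow> weak_le v w \<Longrightarrow> weak_le u w"
  by (auto simp: weak_le_def)

lemma weak_leD: "weak_le u v \<Longrightarrow> is_perm u \<and> is_perm v \<and> length v = length u"
  by (simp add: weak_le_def)

lemma perm_eqI_order:
  assumes "is_perm u" "is_perm v" "length u = length v"
    and "\<And>i j. i < length u \<Longrightarrow> j < length u \<Longrightarrow> u ! i < u ! j \<longleftrightarrow> v ! i < v ! j"
  shows "u = v"
proof -
  have "st u = st v"
  proof (rule nth_equalityI)
    fix i assume i: "i < length (st u)"
    have "{j. j < length u \<and> u ! j \<le> u ! i} = {j. j < length v \<and> v ! j \<le> v ! i}"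
      using assms(3,4) i by (auto simp: not_less[symmetric])
    then show "st u ! i = st v ! i"
      using i assms by (simp add: st_nth is_perm_def)
  qed (use assms in simp)
  then show ?thesis
    using assms by (simp add: st_perm)
qed

lemma weak_le_antisym:
  assumes "weak_le u v" "weak_le v u"
  shows "u = v"
proof -
  have u: "is_perm u" and v: "is_perm v" and len: "length u = length v"
    using assms by (auto simp: weak_le_def)
  have swap: "u ! j < u ! i \<longleftrightarrow> v ! j < v ! i" if "i < j" "j < length u" for i j
    using assms len that by (auto simp: weak_le_iff)
  show ?thesis
  proof (rule perm_eqI_order[OF u v len])
    fix i j assume i: "i < length u" and j: "j < length u"
    consider "i < j" | "i = j" | "j < i"
      by linarith
    then show "u ! i < u ! j \<longleftrightarrow> v ! i < v ! j"
    proof cases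
      case 1
      have "u ! i \<noteq> u ! j" "v ! i \<noteq> v ! j"
        using 1 j u v len by (auto simp: is_perm_def nth_eq_iff_index_eq)
      then show ?thesis
        using swap[OF 1 j] by auto
    qed (use swap i in simp_all)
  qed
qed

lemma finite_Inv: "finite (Inv u)"
  by (rule finite_subset[of _ "{1..length u} \<times> {1..length u}"]) (auto simp: Inv_def)

lemma card_Inv_mono: "weak_le u v \<Longrightarrow> card (Inv u) \<le> card (Inv v)"
  by (simp add: weak_le_def card_mono finite_Inv)

lemma card_Inv_strict_mono:
  assumes "weak_lt u v"
  shows "card (Inv u) < card (Inv v)"
proof (rule psubset_card_mono[OF finite_Inv])
  have "Inv u \<noteq> Inv v"
    using assms weak_le_antisym by (auto simp: weak_lt_def weak_le_def)
  then show "Inv u \<subset> Inv v"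
    using assms by (auto simp: weak_lt_def weak_le_def)
qed

lemma finite_weak_le_upset: "finite {v. weak_le u v}"
  by (rule finite_subset[OF _ finite_perms_length_le[of "length u"]]) (auto simp: weak_le_def)

lemma weak_le_st_take_iff:
  assumes "is_perm v" "is_perm a" "length a \<le> length v"
  shows "weak_le (st (take (length a) v)) a \<longleftrightarrow>
    (\<forall>i j. i < j \<longrightarrow> j < length a \<longrightarrow> v ! j < v ! i \<longrightarrow> a ! j < a ! i)"
proof -
  have "distinct (take (length a) v)"
    using assms by (simp add: is_perm_def)
  from st_less_iff[OF this] is_perm_st[OF this] show ?thesis
    using assms by (auto simp: weak_le_iff min_def)
qed

lemma weak_le_st_drop_iff:
  assumes "is_perm v" "is_perm b" "length v = p + length b"
  shows "weak_le (st (drop p v)) b \<longleftrightarrow>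
    (\<forall>i j. i < j \<longrightarrow> j < length b \<longrightarrow> v ! (p + j) < v ! (p + i) \<longrightarrow> b ! j < b ! i)"
proof -
  have "distinct (drop p v)"
    using assms by (simp add: is_perm_def)
  from st_less_iff[OF this] is_perm_st[OF this] show ?thesis
    using assms by (auto simp: weak_le_iff)
qed

lemma skew_sum_pattern_iff:
  assumes a: "is_perm a" and b: "is_perm b" and len: "length v = length a + length b"
  shows "(\<forall>i j. i < j \<longrightarrow> j < length v \<longrightarrow> v ! j < v ! i \<longrightarrow> (a \<ominus> b) ! j < (a \<ominus> b) ! i) \<longleftrightarrow>
    (\<forall>i j. i < j \<longrightarrow> j < length a \<longrightarrow> v ! j < v ! i \<longrightarrow> a ! j < a ! i) \<and>
    (\<forall>i j. i < j \<longrightarrow> j < length b \<longrightarrow> v ! (length a + j) < v ! (length a + i) \<longrightarrow> b ! j < b ! i)"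
    (is "?L \<longleftrightarrow> ?A \<and> ?B")
proof
  assume L: ?L
  have ?A
  proof (intro allI impI)
    fix i j assume "i < j" "j < length a" "v ! j < v ! i"
    then show "a ! j < a ! i"
      using L[rule_format, of i j] len by (simp add: nth_skew_sum_left)
  qed
  moreover have ?B
  proof (intro allI impI)
    fix i j assume "i < j" "j < length b" "v ! (length a + j) < v ! (length a + i)"
    then show "b ! j < b ! i"
      using L[rule_format, of "length a + i" "length a + j"] len by (simp add: nth_skew_sum_right)
  qed
  ultimately show "?A \<and> ?B" ..
next
  assume AB: "?A \<and> ?B"
  show ?L
  proof (intro allI impI)
    fix i j assume ij: "i < j" "j < length v" "v ! j < v ! i"
    consider "j < length a" | "i < length a" "length a \<le> j" | "length a \<le> i"
      by linarith
    then show "(a \<ominus> b) ! j < (a \<ominus> b) ! i"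
    proof cases
      case 1
      then show ?thesis
        using AB ij by (simp add: nth_skew_sum_left)
    next
      case 2
      have "b ! (j - length a) \<le> length b" "1 \<le> a ! i"
        using is_perm_nth_bounds[OF b, of "j - length a"] is_perm_nth_bounds[OF a, of i] 2 ij len
        by simp_all
      then show ?thesis
        using 2 by (simp add: nth_skew_sum_left nth_skew_sum_right)
    next
      case 3
      then have "b ! (j - length a) < b ! (i - length a)"
        using AB[THEN conjunct2, rule_format, of "i - length a" "j - length a"] ij len by simp
      then show ?thesis
        using 3 ij by (simp add: nth_skew_sum_right)
    qed
  qed
qed

lemma weak_le_skew_sum_iff:
  assumes v: "is_perm v" and a: "is_perm a" and b: "is_perm b"
    and len: "length v = length a + length b"
  shows "weak_le v (a \<ominus> b) \<longleftrightarrow>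
    weak_le (st (take (length a) v)) a \<and> weak_le (st (drop (length a) v)) b"
  using skew_sum_pattern_iff[OF a b len] weak_le_st_take_iff[OF v a] weak_le_st_drop_iff[OF v b len]
    v is_perm_skew_sum[OF a b] len
  by (simp add: weak_le_iff[of v])

section \<open>Global descents and the skew decomposition\<close>

definition global_descent_at :: "nat list \<Rightarrow> nat \<Rightarrow> bool" where
  "global_descent_at w p \<longleftrightarrow> (\<forall>i j. i < p \<longrightarrow> p \<le> j \<longrightarrow> j < length w \<longrightarrow> w ! j < w ! i)"

lemma GDes_iff: "p \<in> GDes w \<longleftrightarrow> 1 \<le> p \<and> p < length w \<and> global_descent_at w p"
proof
  assume "p \<in> GDes w"
  then have p: "1 \<le> p" "p \<le> length w - 1"
    and desc: "\<And>i j. 1 \<le> i \<and> i \<le> p \<and> p < j \<and> j \<le> length w \<longrightarrow> w ! (i - 1) > w ! (j - 1)"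
    unfolding GDes_def by blast+
  have "global_descent_at w p"
    unfolding global_descent_at_def
  proof (intro allI impI)
    fix i j assume "i < p" "p \<le> j" "j < length w"
    then show "w ! j < w ! i"
      using desc[of "Suc i" "Suc j"] by simp
  qed
  then show "1 \<le> p \<and> p < length w \<and> global_descent_at w p"
    using p by auto
next
  assume H: "1 \<le> p \<and> p < length w \<and> global_descent_at w p"
  have "\<forall>i j. 1 \<le> i \<and> i \<le> p \<and> p < j \<and> j \<le> length w \<longrightarrow> w ! (i - 1) > w ! (j - 1)"
  proof (intro allI impI)
    fix i j assume "1 \<le> i \<and> i \<le> p \<and> p < j \<and> j \<le> length w"
    then have "i - 1 < p" "p \<le> j - 1" "j - 1 < length w"
      by auto
    then show "w ! (i - 1) > w ! (j - 1)"
      using H unfolding global_descent_at_def by blast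
  qed
  then show "p \<in> GDes w"
    using H unfolding GDes_def by auto
qed

lemma finite_GDes: "finite (GDes w)"
  by (rule finite_subset[of _ "{..<length w}"]) (auto simp: GDes_iff)

lemma global_descent_at_skew_sum:
  assumes "is_perm a" "is_perm b"
  shows "global_descent_at (a \<ominus> b) (length a)"
  unfolding global_descent_at_def
proof (intro allI impI)
  fix i j assume ij: "i < length a" "length a \<le> j" "j < length (a \<ominus> b)"
  have "b ! (j - length a) \<le> length b" "1 \<le> a ! i"
    using is_perm_nth_bounds[OF assms(2), of "j - length a"] is_perm_nth_bounds[OF assms(1)] ij
    by simp_all
  then show "(a \<ominus> b) ! j < (a \<ominus> b) ! i"
    using ij by (simp add: nth_skew_sum_left nth_skew_sum_right)
qed

lemma global_descent_at_skew_sum_left: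
  assumes "p < length a" "global_descent_at (a \<ominus> b) p"
  shows "global_descent_at a p"
  unfolding global_descent_at_def
proof (intro allI impI)
  fix i j assume "i < p" "p \<le> j" "j < length a"
  then show "a ! j < a ! i"
    using assms(2)[unfolded global_descent_at_def, rule_format, of i j] by (simp add: nth_skew_sum_left)
qed

lemma global_descent_at_skew_sum_left_iff:
  assumes "is_perm a" "is_perm b" "p < length a"
  shows "global_descent_at (a \<ominus> b) p \<longleftrightarrow> global_descent_at a p"
proof
  assume desc: "global_descent_at a p"
  show "global_descent_at (a \<ominus> b) p"
    unfolding global_descent_at_def
  proof (intro allI impI)
    fix i j assume ij: "i < p" "p \<le> j" "j < length (a \<ominus> b)"
    show "(a \<ominus> b) ! j < (a \<ominus> b) ! i"
    proof (cases "j < length a")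
      case True
      then show ?thesis
        using desc ij assms by (auto simp: global_descent_at_def nth_skew_sum_left)
    next
      case False
      then show ?thesis
        using global_descent_at_skew_sum[OF assms(1,2)] ij assms(3)
        unfolding global_descent_at_def by simp
    qed
  qed
qed (use assms global_descent_at_skew_sum_left in blast)

lemma global_descent_at_skew_sum_right_iff:
  assumes "is_perm a" "is_perm b" "length a < p"
  shows "global_descent_at (a \<ominus> b) p \<longleftrightarrow> global_descent_at b (p - length a)"
proof
  assume desc: "global_descent_at (a \<ominus> b) p"
  show "global_descent_at b (p - length a)"
    unfolding global_descent_at_def
  proof (intro allI impI)
    fix i j assume "i < p - length a" "p - length a \<le> j" "j < length b"
    then show "b ! j < b ! i"
      using desc[unfolded global_descent_at_def, rule_format, of "length a + i" "length a + j"]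
      by (simp add: nth_skew_sum_right)
  qed
next
  assume desc: "global_descent_at b (p - length a)"
  show "global_descent_at (a \<ominus> b) p"
    unfolding global_descent_at_def
  proof (intro allI impI)
    fix i j assume ij: "i < p" "p \<le> j" "j < length (a \<ominus> b)"
    show "(a \<ominus> b) ! j < (a \<ominus> b) ! i"
    proof (cases "i < length a")
      case False
      then show ?thesis
        using desc[unfolded global_descent_at_def, rule_format, of "i - length a" "j - length a"]
          ij assms(3)
        by (simp add: nth_skew_sum_right)
    next
      case True
      then show ?thesis
        using global_descent_at_skew_sum[OF assms(1,2)] ij assms(3)
        unfolding global_descent_at_def by simp
    qed
  qed
qed

lemma GDes_skew_sum:
  assumes a: "is_perm a" "a \<noteq> []" and b: "is_perm b" "b \<noteq> []"
  shows "GDes (a \<ominus> b) = GDes a \<union> {length a} \<union> (\<lambda>p. p + length a) ` GDes b"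
proof (rule set_eqI)
  fix p
  consider "p < length a" | "p = length a" | "length a < p"
    by linarith
  then show "p \<in> GDes (a \<ominus> b) \<longleftrightarrow> p \<in> GDes a \<union> {length a} \<union> (\<lambda>p. p + length a) ` GDes b"
  proof cases
    case 1
    then show ?thesis
      using global_descent_at_skew_sum_left_iff[OF a(1) b(1) 1] by (auto simp: GDes_iff)
  next
    case 2
    then show ?thesis
      using global_descent_at_skew_sum[OF a(1) b(1)] a b by (auto simp: GDes_iff Suc_le_eq)
  next
    case 3
    have "p \<in> (\<lambda>p. p + length a) ` GDes b \<longleftrightarrow> p - length a \<in> GDes b"
      using 3 by (auto simp: image_iff intro!: bexI[where x="p - length a"])
    then show ?thesis
      using global_descent_at_skew_sum_right_iff[OF a(1) b(1) 3] 3 by (auto simp: GDes_iff)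
  qed
qed

text \<open>Each entry after a global descent p lies below the p entries before it, hence is at
  most n - p.\<close>

lemma set_drop_global_descent:
  assumes w: "is_perm w" and p: "p \<le> length w" and desc: "global_descent_at w p"
  shows "set (drop p w) = {1..length w - p}" "set (take p w) = {length w - p + 1..length w}"
proof -
  define A where "A = set (take p w)"
  define B where "B = set (drop p w)"
  have dw: "distinct w" and sw: "set w = {1..length w}"
    using w by (auto simp: is_perm_def)
  have cA: "card A = p" and cB: "card B = length w - p"
    using dw p by (simp_all add: A_def B_def distinct_card)
  have AB: "A \<union> B = {1..length w}" and disj: "A \<inter> B = {}"
    using sw dw by (metis A_def B_def set_append append_take_drop_id distinct_append)+
  have below: "y < x" if "x \<in> A" "y \<in> B" for x y
  proof -
    from that obtain i j where "i < p" "x = w ! i" "j < length w - p" "y = w ! (p + j)"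
      using p by (auto simp: A_def B_def in_set_conv_nth)
    then show "y < x"
      using desc p unfolding global_descent_at_def by auto
  qed
  have "B \<subseteq> {1..length w - p}"
  proof
    fix y assume y: "y \<in> B"
    have "A \<subseteq> {y + 1..length w}"
      using below[OF _ y] AB by fastforce
    then have "card A \<le> length w - y"
      using card_mono[of "{y + 1..length w}" A] by simp
    moreover have "y \<in> {1..length w}"
      using y AB by blast
    ultimately show "y \<in> {1..length w - p}"
      using cA by auto
  qed
  then show B_eq: "set (drop p w) = {1..length w - p}"
    using cB by (simp add: card_subset_eq B_def)
  have "A = {1..length w} - B"
    using AB disj by blast
  then show "set (take p w) = {length w - p + 1..length w}"
    using B_eq p by (auto simp: A_def B_def)
qed

lemma global_descent_split:
  assumes w: "is_perm w" and p: "p \<le> length w" and "global_descent_at w p"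
  shows "is_perm (st (take p w))" "is_perm (st (drop p w))"
    and "w = st (take p w) \<ominus> st (drop p w)"
proof -
  define q where "q = length w - p"
  note sets = set_drop_global_descent[OF assms, folded q_def]
  have dw: "distinct w"
    using w by (simp add: is_perm_def)
  have perm_drop: "is_perm (drop p w)"
    using sets(1) dw p by (simp add: is_perm_def q_def)
  have st_take: "st (take p w) = map (\<lambda>x. x - q) (take p w)"
    by (rule st_shifted) (use dw sets(2) p in \<open>simp_all add: q_def min_def\<close>)
  show "is_perm (st (take p w))" "is_perm (st (drop p w))"
    using is_perm_st_take is_perm_st_drop w by blast+
  have "map (\<lambda>x. x - q + q) (take p w) = take p w"
    by (rule map_idI) (use sets(2) in auto)
  then show "w = st (take p w) \<ominus> st (drop p w)"
    using perm_drop st_take p by (simp add: skew_sum_def st_perm q_def comp_def)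
qed

definition skew_indecomposable :: "nat list \<Rightarrow> bool" where
  "skew_indecomposable u \<longleftrightarrow> is_perm u \<and> u \<noteq> [] \<and> GDes u = {}"

fun skew_sum_list :: "nat list list \<Rightarrow> nat list" where
  "skew_sum_list [] = []"
| "skew_sum_list (c # cs) = c \<ominus> skew_sum_list cs"

lemma is_perm_skew_sum_list: "(\<forall>c\<in>set cs. is_perm c) \<Longrightarrow> is_perm (skew_sum_list cs)"
  by (induct cs) (auto intro: is_perm_skew_sum)

lemma skew_sum_list_append: "skew_sum_list (xs @ ys) = skew_sum_list xs \<ominus> skew_sum_list ys"
  by (induct xs) (auto simp: skew_sum_assoc)

lemma skew_sum_list_eq_Nil_iff:
  "(\<forall>c\<in>set cs. skew_indecomposable c) \<Longrightarrow> skew_sum_list cs = [] \<longleftrightarrow> cs = []"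
  by (cases cs) (auto simp: skew_indecomposable_def skew_sum_def)

lemma card_GDes_skew_sum_list:
  assumes "\<forall>c\<in>set cs. skew_indecomposable c" "cs \<noteq> []"
  shows "card (GDes (skew_sum_list cs)) = length cs - 1"
  using assms
proof (induct cs)
  case (Cons c cs)
  show ?case
  proof (cases "cs = []")
    case False
    have c: "is_perm c" "c \<noteq> []"
      using Cons.prems by (simp_all add: skew_indecomposable_def)
    have rest: "is_perm (skew_sum_list cs)" "skew_sum_list cs \<noteq> []"
      using Cons.prems False skew_sum_list_eq_Nil_iff
      by (auto intro: is_perm_skew_sum_list simp: skew_indecomposable_def)
    have "GDes (skew_sum_list (c # cs)) = insert (length c) ((\<lambda>p. p + length c) ` GDes (skew_sum_list cs))"
      using GDes_skew_sum[OF c rest] Cons.prems by (auto simp: skew_indecomposable_def)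
    moreover have "length c \<notin> (\<lambda>p. p + length c) ` GDes (skew_sum_list cs)"
      by (auto simp: GDes_iff)
    moreover have "card ((\<lambda>p. p + length c) ` GDes (skew_sum_list cs)) = card (GDes (skew_sum_list cs))"
      by (rule card_image) (simp add: inj_on_def)
    ultimately show ?thesis
      using Cons False finite_GDes by simp
  qed (use Cons.prems in \<open>simp add: skew_indecomposable_def\<close>)
qed simp

lemma skew_sum_cancel:
  assumes a: "skew_indecomposable a" and c: "skew_indecomposable c"
    and b: "is_perm b" and d: "is_perm d" and eq: "a \<ominus> b = c \<ominus> d"
  shows "a = c" "b = d"
proof -
  \<comment> \<open>The length of a shorter indecomposable left factor would be a global descent of the
    longer one.\<close>
  have no_shorter: False
    if "skew_indecomposable x" "skew_indecomposable y" "is_perm z" "x \<ominus> z = y \<ominus> t"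
      "length x < length y" for x y z t
  proof -
    have "global_descent_at (y \<ominus> t) (length x)"
      using global_descent_at_skew_sum that(1,3,4) by (metis skew_indecomposable_def)
    then have "global_descent_at y (length x)"
      using global_descent_at_skew_sum_left that(5) by blast
    moreover have "1 \<le> length x"
      using that(1) by (cases x) (auto simp: skew_indecomposable_def)
    ultimately have "length x \<in> GDes y"
      using that(5) by (simp add: GDes_iff)
    then show False
      using that(2) by (simp add: skew_indecomposable_def)
  qed
  have len_a: "length a = length c"
    using no_shorter[OF a c b eq] no_shorter[OF c a d eq[symmetric]] by (meson linorder_neqE_nat)
  then have len_b: "length b = length d"
    using arg_cong[OF eq, of length] by simp
  have "map (\<lambda>x. x + length b) a = map (\<lambda>x. x + length b) c"
    using arg_cong[OF eq, of "take (length a)"] len_a len_b by (simp add: skew_sum_def)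
  then show "a = c"
    by (simp add: inj_on_def)
  show "b = d"
    using arg_cong[OF eq, of "drop (length a)"] len_a len_b by (simp add: skew_sum_def)
qed

lemma skew_decomposition_unique:
  "(\<forall>c\<in>set cs. skew_indecomposable c) \<Longrightarrow> (\<forall>c\<in>set ds. skew_indecomposable c) \<Longrightarrow>
    skew_sum_list cs = skew_sum_list ds \<Longrightarrow> cs = ds"
proof (induct cs arbitrary: ds)
  case Nil
  then show ?case
    using skew_sum_list_eq_Nil_iff[of ds] by simp
next
  case (Cons c cs)
  then have "ds \<noteq> []"
    using skew_sum_list_eq_Nil_iff[of "c # cs"] by auto
  then obtain d ds' where ds: "ds = d # ds'"
    by (cases ds) auto
  have indec: "skew_indecomposable c" "skew_indecomposable d"
    "\<forall>c\<in>set cs. skew_indecomposable c" "\<forall>c\<in>set ds'. skew_indecomposable c"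
    using Cons.prems ds by auto
  have perms: "is_perm (skew_sum_list cs)" "is_perm (skew_sum_list ds')"
    using indec by (auto intro!: is_perm_skew_sum_list simp: skew_indecomposable_def)
  have "c \<ominus> skew_sum_list cs = d \<ominus> skew_sum_list ds'"
    using Cons.prems(3) ds by simp
  from skew_sum_cancel[OF indec(1,2) perms this] show ?case
    using Cons.hyps[OF indec(3,4)] ds by auto
qed

lemma skew_decomposition_exists:
  "is_perm w \<Longrightarrow> \<exists>cs. (\<forall>c\<in>set cs. skew_indecomposable c) \<and> skew_sum_list cs = w"
proof (induct "length w" arbitrary: w rule: less_induct)
  case less
  show ?case
  proof (cases "w = [] \<or> GDes w = {}")
    case True
    then show ?thesis
      using less.prems
      by (metis empty_iff list.set(1) set_ConsD skew_indecomposable_def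
          skew_sum_Nil_right skew_sum_list.simps)
  next
    case False
    then obtain p where p: "1 \<le> p" "p < length w" "global_descent_at w p"
      by (auto simp: GDes_iff)
    note split = global_descent_split[OF less.prems less_imp_le[OF p(2)] p(3)]
    have "length (st (take p w)) < length w" "length (st (drop p w)) < length w"
      using p by simp_all
    then obtain cs1 cs2 where
      cs1: "\<forall>c\<in>set cs1. skew_indecomposable c" "skew_sum_list cs1 = st (take p w)" and
      cs2: "\<forall>c\<in>set cs2. skew_indecomposable c" "skew_sum_list cs2 = st (drop p w)"
      using less.hyps split(1,2) by meson
    have "skew_sum_list (cs1 @ cs2) = w"
      using cs1 cs2 split(3) by (simp add: skew_sum_list_append)
    then show ?thesis
      using cs1 cs2 by (metis Un_iff set_append)
  qed
qed

definition skew_blocks :: "nat list \<Rightarrow> nat list list" where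
  "skew_blocks w = (THE cs. (\<forall>c\<in>set cs. skew_indecomposable c) \<and> skew_sum_list cs = w)"

lemma skew_blocks:
  assumes "is_perm w"
  shows "\<forall>c\<in>set (skew_blocks w). skew_indecomposable c" "skew_sum_list (skew_blocks w) = w"
proof -
  have "\<exists>!cs. (\<forall>c\<in>set cs. skew_indecomposable c) \<and> skew_sum_list cs = w"
    using skew_decomposition_exists[OF assms] skew_decomposition_unique by blast
  then have "(\<forall>c\<in>set (skew_blocks w). skew_indecomposable c) \<and> skew_sum_list (skew_blocks w) = w"
    unfolding skew_blocks_def by (rule theI')
  then show "\<forall>c\<in>set (skew_blocks w). skew_indecomposable c" "skew_sum_list (skew_blocks w) = w"
    by simp_all
qed

lemma skew_blocks_skew_sum_list:
  "\<forall>c\<in>set cs. skew_indecomposable c \<Longrightarrow> skew_blocks (skew_sum_list cs) = cs"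
  using skew_blocks[of "skew_sum_list cs"] skew_decomposition_unique is_perm_skew_sum_list
  by (metis skew_indecomposable_def)

lemma skew_blocks_skew_sum:
  assumes "is_perm a" "is_perm b"
  shows "skew_blocks (a \<ominus> b) = skew_blocks a @ skew_blocks b"
  using skew_blocks[OF assms(1)] skew_blocks[OF assms(2)]
    skew_blocks_skew_sum_list[of "skew_blocks a @ skew_blocks b"]
  by (auto simp: skew_sum_list_append)

lemma skew_blocks_Nil [simp]: "skew_blocks [] = []"
  using skew_blocks_skew_sum_list[of "[]"] by simp

lemma skew_blocks_cut:
  fixes j :: nat
  assumes w: "is_perm w"
  defines "a \<equiv> skew_sum_list (take j (skew_blocks w))" and "b \<equiv> skew_sum_list (drop j (skew_blocks w))"
  shows "a \<ominus> b = w" "is_perm a" "is_perm b"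
    and "skew_blocks a = take j (skew_blocks w)" "skew_blocks b = drop j (skew_blocks w)"
proof -
  note blocks = skew_blocks[OF w]
  have indec: "\<forall>c\<in>set (take j (skew_blocks w)). skew_indecomposable c"
    "\<forall>c\<in>set (drop j (skew_blocks w)). skew_indecomposable c"
    using blocks(1) by (auto dest: in_set_takeD in_set_dropD)
  show "a \<ominus> b = w"
    using blocks(2) skew_sum_list_append[of "take j (skew_blocks w)" "drop j (skew_blocks w)"]
    by (simp add: a_def b_def)
  show "is_perm a" "is_perm b"
    using indec by (auto intro!: is_perm_skew_sum_list simp: a_def b_def skew_indecomposable_def)
  show "skew_blocks a = take j (skew_blocks w)" "skew_blocks b = drop j (skew_blocks w)"
    using indec by (simp_all add: a_def b_def skew_blocks_skew_sum_list)
qed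

lemma skew_blocks_eq_Nil_iff: "is_perm w \<Longrightarrow> skew_blocks w = [] \<longleftrightarrow> w = []"
  using skew_blocks[of w] by auto

lemma Suc_card_GDes:
  assumes "is_perm w" "w \<noteq> []"
  shows "Suc (card (GDes w)) = length (skew_blocks w)"
  using card_GDes_skew_sum_list[OF skew_blocks(1)[OF assms(1)]] skew_blocks(2)[OF assms(1)]
    skew_blocks_eq_Nil_iff[OF assms(1)] assms(2) by simp

lemma Sk_eq: "Sk k = {w. is_perm w \<and> length (skew_blocks w) = k}"
proof (intro set_eqI)
  fix w
  show "w \<in> Sk k \<longleftrightarrow> w \<in> {w. is_perm w \<and> length (skew_blocks w) = k}"
  proof (cases "is_perm w \<and> w \<noteq> []")
    case True
    then show ?thesis
      using Suc_card_GDes[of w] by (auto simp: Sk_def Suc_le_eq)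
  qed (auto simp: Sk_def)
qed

lemma skew_indecomposable_iff_Sk1: "skew_indecomposable u \<longleftrightarrow> u \<in> Sk 1"
proof
  assume "skew_indecomposable u"
  then show "u \<in> Sk 1"
    using skew_blocks_skew_sum_list[of "[u]"] by (simp add: Sk_eq skew_indecomposable_def)
next
  assume "u \<in> Sk 1"
  then obtain c where "is_perm u" "skew_blocks u = [c]"
    by (auto simp: Sk_eq length_Suc_conv)
  then show "skew_indecomposable u"
    using skew_blocks[of u] by auto
qed

section \<open>Finitely supported functions\<close>

interpretation rat_fun: vector_space "scal :: rat \<Rightarrow> ('a \<Rightarrow> rat) \<Rightarrow> 'a \<Rightarrow> rat"
  by unfold_locales (simp_all add: scal_def fun_eq_iff algebra_simps)

lemma scal_apply: "scal c f x = c * f x"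
  by (simp add: scal_def)

lemma sum_apply: "(\<Sum>i\<in>I. f i) x = (\<Sum>i\<in>I. f i x)"
  by (induct I rule: infinite_finite_induct) auto

lemma lspan_eq_span: "lspan = rat_fun.span"
  by (auto simp: fun_eq_iff lspan_def rat_fun.span_explicit)

lemma fsupp_zero [simp]: "fsupp 0 = {}"
  by (simp add: fsupp_def)

lemma fsupp_add: "fsupp (f + g) \<subseteq> fsupp f \<union> fsupp g"
  by (auto simp: fsupp_def)

lemma fsupp_scal: "fsupp (scal c f) \<subseteq> fsupp f"
  by (auto simp: fsupp_def scal_apply)

lemma fsupp_sum: "fsupp (\<Sum>i\<in>I. f i) \<subseteq> (\<Union>i\<in>I. fsupp (f i))"
  unfolding fsupp_def sum_apply using sum.not_neutral_contains_not_neutral by blast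

lemma subspace_finite_fsupp: "rat_fun.subspace {f. finite (fsupp f)}"
  unfolding rat_fun.subspace_def
  by (auto intro: finite_subset[OF fsupp_add] finite_subset[OF fsupp_scal])

lemma subspace_SSym: "rat_fun.subspace SSym"
  unfolding rat_fun.subspace_def SSym_def
  by (auto intro: finite_subset[OF fsupp_add] finite_subset[OF fsupp_scal]
      dest: subsetD[OF fsupp_add] subsetD[OF fsupp_scal])

lemma fsupp_FF [simp]: "fsupp (FF a) = {a}"
  by (auto simp: fsupp_def FF_def)

lemma sum_scal_FF_apply:
  "finite V \<Longrightarrow> (\<Sum>v\<in>V. scal (c v) (FF v)) u = (if u \<in> V then c u else 0)"
  by (simp add: sum_apply scal_apply FF_def if_distrib[of "\<lambda>x. _ * x"] cong: if_cong)

lemma expand_FF: "finite (fsupp f) \<Longrightarrow> f = (\<Sum>u\<in>fsupp f. scal (f u) (FF u))"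
  by (rule ext) (auto simp: sum_scal_FF_apply fsupp_def)

lemma span_image_explicit:
  assumes "x \<in> rat_fun.span (f ` A)"
  shows "\<exists>B c. finite B \<and> B \<subseteq> A \<and> x = (\<Sum>b\<in>B. scal (c b) (f b))"
proof -
  obtain T c where T: "finite T" "T \<subseteq> f ` A" "x = (\<Sum>v\<in>T. scal (c v) v)"
    using assms unfolding rat_fun.span_explicit by blast
  define B where "B = inv_into A f ` T"
  have "f (inv_into A f v) = v" if "v \<in> T" for v
    using T(2) that by (meson f_inv_into_f subsetD)
  then have "f ` B = T" "inj_on f B"
    unfolding B_def by (force simp: image_image, auto simp: inj_on_def)
  then have "(\<Sum>b\<in>B. scal (c (f b)) (f b)) = x"
    using sum.reindex[of f B "\<lambda>v. scal (c v) v"] T(3) by simp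
  moreover have "finite B" "B \<subseteq> A"
    unfolding B_def using T(1,2) by (auto intro: inv_into_into)
  ultimately show ?thesis
    by metis
qed

text \<open>For f of infinite support the sum is 0 by convention, so lin_ext P is linear only on
  finitely supported functions.\<close>

definition lin_ext :: "('a \<Rightarrow> 'b \<Rightarrow> rat) \<Rightarrow> ('a \<Rightarrow> rat) \<Rightarrow> 'b \<Rightarrow> rat" where
  "lin_ext P f = (\<Sum>u\<in>fsupp f. scal (f u) (P u))"

lemma lin_ext_eq_sum:
  assumes "finite S" "fsupp f \<subseteq> S"
  shows "lin_ext P f = (\<Sum>u\<in>S. scal (f u) (P u))"
  unfolding lin_ext_def
  by (rule sum.mono_neutral_left[OF assms]) (auto simp: fsupp_def fun_eq_iff)

lemma lin_ext_add:
  assumes "finite (fsupp f)" "finite (fsupp g)"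
  shows "lin_ext P (f + g) = lin_ext P f + lin_ext P g"
proof -
  have fin: "finite (fsupp f \<union> fsupp g)"
    using assms by simp
  show ?thesis
    using lin_ext_eq_sum[OF fin, of "f + g" P] lin_ext_eq_sum[OF fin, of f P]
      lin_ext_eq_sum[OF fin, of g P] fsupp_add[of f g]
    by (simp add: fun_eq_iff sum_apply scal_apply sum.distrib distrib_right)
qed

lemma lin_ext_scal:
  assumes "finite (fsupp f)"
  shows "lin_ext P (scal c f) = scal c (lin_ext P f)"
  using lin_ext_eq_sum[OF assms, of "scal c f" P] fsupp_scal[of c f]
  by (simp add: lin_ext_def fun_eq_iff sum_apply scal_apply sum_distrib_left mult.assoc)

lemma lin_ext_sum:
  assumes "\<And>i. i \<in> I \<Longrightarrow> finite (fsupp (f i))"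
  shows "lin_ext P (\<Sum>i\<in>I. f i) = (\<Sum>i\<in>I. lin_ext P (f i))"
  using assms
proof (induct I rule: infinite_finite_induct)
  case (insert i I)
  have "finite (fsupp (\<Sum>i\<in>I. f i))"
    using insert by (intro finite_subset[OF fsupp_sum]) auto
  then have "lin_ext P (f i + (\<Sum>i\<in>I. f i)) = lin_ext P (f i) + lin_ext P (\<Sum>i\<in>I. f i)"
    using insert by (intro lin_ext_add) auto
  then show ?case
    using insert by (simp del: plus_fun_apply)
qed (simp_all add: lin_ext_def fsupp_def)

lemma lin_ext_point: "lin_ext P (\<lambda>x. if x = a then 1 else 0) = P a"
proof -
  have "fsupp (\<lambda>x. if x = a then 1 else 0 :: rat) = {a}"
    by (auto simp: fsupp_def)
  then show ?thesis
    by (simp add: lin_ext_def scal_def)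
qed

lemma lin_ext_FF: "lin_ext P (FF a) = P a"
  using lin_ext_point by (simp add: FF_def)

lemma lin_ext_sum_scal:
  assumes "\<And>i. i \<in> I \<Longrightarrow> finite (fsupp (f i))"
  shows "lin_ext P (\<Sum>i\<in>I. scal (c i) (f i)) = (\<Sum>i\<in>I. scal (c i) (lin_ext P (f i)))"
proof -
  have "lin_ext P (\<Sum>i\<in>I. scal (c i) (f i)) = (\<Sum>i\<in>I. lin_ext P (scal (c i) (f i)))"
    using assms finite_subset[OF fsupp_scal] by (intro lin_ext_sum) blast
  also have "\<dots> = (\<Sum>i\<in>I. scal (c i) (lin_ext P (f i)))"
    using assms by (intro sum.cong[OF refl] lin_ext_scal)
  finally show ?thesis .
qed

lemma lin_ext_sum_scal_FF: "lin_ext P (\<Sum>v\<in>V. scal (c v) (FF v)) = (\<Sum>v\<in>V. scal (c v) (P v))"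
  by (simp add: lin_ext_sum_scal lin_ext_FF)

lemma lin_ext_zero [simp]: "lin_ext P 0 = 0"
  by (simp add: lin_ext_def fsupp_def)

lemma lin_ext_span_subset:
  assumes S: "S \<subseteq> {f. finite (fsupp f)}"
  shows "lin_ext P ` rat_fun.span S \<subseteq> rat_fun.span (lin_ext P ` S)"
proof
  fix y assume "y \<in> lin_ext P ` rat_fun.span S"
  then obtain T r where T: "finite T" "T \<subseteq> S" "y = lin_ext P (\<Sum>a\<in>T. scal (r a) a)"
    unfolding rat_fun.span_explicit by blast
  moreover have "lin_ext P (\<Sum>a\<in>T. scal (r a) a) = (\<Sum>a\<in>T. scal (r a) (lin_ext P a))"
    using T(2) S by (intro lin_ext_sum_scal) auto
  moreover have "(\<Sum>a\<in>T. scal (r a) (lin_ext P a)) \<in> rat_fun.span (lin_ext P ` S)"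
    using T(2) by (intro rat_fun.span_sum rat_fun.span_scale) (auto intro: rat_fun.span_base)
  ultimately show "y \<in> rat_fun.span (lin_ext P ` S)"
    by simp
qed

lemma subspace_lin_ext_image:
  assumes "V \<subseteq> {f. finite (fsupp f)}" "rat_fun.subspace V"
  shows "rat_fun.subspace (lin_ext P ` V)"
  unfolding rat_fun.subspace_def
proof (intro conjI ballI allI)
  show "0 \<in> lin_ext P ` V"
    using rat_fun.subspace_0[OF assms(2)] lin_ext_zero[of P] by (metis image_eqI)
next
  fix x y assume "x \<in> lin_ext P ` V" "y \<in> lin_ext P ` V"
  then obtain x' y' where x': "x' \<in> V" "x = lin_ext P x'" and y': "y' \<in> V" "y = lin_ext P y'"
    by blast
  have "finite (fsupp x')" "finite (fsupp y')"
    using x'(1) y'(1) assms(1) by auto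
  then have "x + y = lin_ext P (x' + y')"
    using lin_ext_add[of x' y' P] x'(2) y'(2) by simp
  then show "x + y \<in> lin_ext P ` V"
    using rat_fun.subspace_add[OF assms(2) x'(1) y'(1)] by blast
next
  fix c x assume "x \<in> lin_ext P ` V"
  then obtain x' where x': "x' \<in> V" "x = lin_ext P x'"
    by blast
  have "finite (fsupp x')"
    using x'(1) assms(1) by auto
  then have "scal c x = lin_ext P (scal c x')"
    using lin_ext_scal[of x' P c] x'(2) by simp
  then show "scal c x \<in> lin_ext P ` V"
    using rat_fun.subspace_scale[OF assms(2) x'(1)] by blast
qed

lemma lin_ext_span_image:
  assumes S: "S \<subseteq> {f. finite (fsupp f)}"
  shows "lin_ext P ` rat_fun.span S = rat_fun.span (lin_ext P ` S)"
proof
  show "lin_ext P ` rat_fun.span S \<subseteq> rat_fun.span (lin_ext P ` S)"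
    by (rule lin_ext_span_subset[OF S])
  have "rat_fun.subspace (lin_ext P ` rat_fun.span S)"
    using rat_fun.span_minimal[OF S subspace_finite_fsupp]
    by (intro subspace_lin_ext_image rat_fun.subspace_span)
  moreover have "lin_ext P ` S \<subseteq> lin_ext P ` rat_fun.span S"
    using rat_fun.span_superset by (rule image_mono)
  ultimately show "rat_fun.span (lin_ext P ` S) \<subseteq> lin_ext P ` rat_fun.span S"
    by (intro rat_fun.span_minimal)
qed

lemma lin_ext_eq_on_span:
  assumes S: "S \<subseteq> {f. finite (fsupp f)}" and eq: "\<And>x. x \<in> S \<Longrightarrow> lin_ext P x = lin_ext Q x"
    and x: "x \<in> rat_fun.span S"
  shows "lin_ext P x = lin_ext Q x"
proof -
  obtain T r where T: "finite T" "T \<subseteq> S" "x = (\<Sum>a\<in>T. scal (r a) a)"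
    using x unfolding rat_fun.span_explicit by blast
  have "lin_ext P x = (\<Sum>a\<in>T. scal (r a) (lin_ext P a))"
    "lin_ext Q x = (\<Sum>a\<in>T. scal (r a) (lin_ext Q a))"
    unfolding T(3) using T(2) S by (intro lin_ext_sum_scal; auto)+
  then show ?thesis
    using T(2) eq by (auto intro!: sum.cong)
qed

lemma Delta_eq_lin_ext: "Delta = lin_ext DeltaF"
  by (simp add: fun_eq_iff Delta_def lin_ext_def)

lemma triangular_independent:
  fixes g :: "'i \<Rightarrow> 'k \<Rightarrow> rat" and rank :: "'i \<Rightarrow> nat"
  assumes W: "finite W"
    and diag: "\<And>i. i \<in> W \<Longrightarrow> g i (key i) \<noteq> 0"
    and tri: "\<And>i j. i \<in> W \<Longrightarrow> j \<in> W \<Longrightarrow> i \<noteq> j \<Longrightarrow> g i (key j) \<noteq> 0 \<Longrightarrow> rank i < rank j"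
    and zero: "(\<Sum>i\<in>W. scal (c i) (g i)) = 0"
  shows "\<forall>i\<in>W. c i = 0"
proof (rule ccontr)
  assume "\<not> (\<forall>i\<in>W. c i = 0)"
  \<comment> \<open>Evaluate at the key of a member of minimal rank with nonzero coefficient.\<close>
  then obtain j where j: "j \<in> W" "c j \<noteq> 0"
    and min: "\<And>i. i \<in> W \<Longrightarrow> c i \<noteq> 0 \<Longrightarrow> rank j \<le> rank i"
    using ex_has_least_nat[of "\<lambda>i. i \<in> W \<and> c i \<noteq> 0" _ rank] by blast
  have "c i * g i (key j) = 0" if "i \<in> W - {j}" for i
    using tri[of i j] min[of i] that j(1) by force
  then have "(\<Sum>i\<in>W - {j}. c i * g i (key j)) = 0"
    by (rule sum.neutral[rule_format])
  then have "(\<Sum>i\<in>W. scal (c i) (g i)) (key j) = c j * g j (key j)"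
    using W j(1) by (simp add: sum_apply scal_apply sum.remove)
  then show False
    using zero j diag by simp
qed

section \<open>The Moebius function and the monomial basis\<close>

lemma card_pairs_le_fact: "card {(i, j). 1 \<le> i \<and> i < j \<and> j \<le> (n::nat)} \<le> fact n"
proof (induct n)
  case 0
  have empty: "{(i, j). 1 \<le> i \<and> i < j \<and> j \<le> (0::nat)} = {}"
    by auto
  show ?case
    unfolding empty by simp
next
  case (Suc n)
  have eq: "{(i, j). 1 \<le> i \<and> i < j \<and> j \<le> Suc n} =
      {(i, j). 1 \<le> i \<and> i < j \<and> j \<le> n} \<union> (\<lambda>i. (i, Suc n)) ` {1..n}"
    by (auto simp: le_Suc_eq)
  have "card {(i, j). 1 \<le> i \<and> i < j \<and> j \<le> Suc n} \<le>
      card {(i, j). 1 \<le> i \<and> i < j \<and> j \<le> n} + card ((\<lambda>i. (i, Suc n)) ` {1..n})"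
    unfolding eq by (rule card_Un_le)
  also have "\<dots> \<le> fact n + n"
    using Suc card_image_le[of "{1..n}" "\<lambda>i. (i, Suc n)"] by simp
  also have "\<dots> \<le> fact (Suc n)"
    using fact_ge_1[of n] by simp
  finally show ?case .
qed

lemma card_Inv_le_fact: "card (Inv u) \<le> fact (length u)"
proof -
  have "finite {(i, j). 1 \<le> i \<and> i < j \<and> j \<le> length u}"
    by (rule finite_subset[of _ "{1..length u} \<times> {1..length u}"]) auto
  moreover have "Inv u \<subseteq> {(i, j). 1 \<le> i \<and> i < j \<and> j \<le> length u}"
    by (auto simp: Inv_def)
  ultimately have "card (Inv u) \<le> card {(i, j). 1 \<le> i \<and> i < j \<and> j \<le> length u}"
    by (rule card_mono)
  then show ?thesis
    using card_pairs_le_fact order_trans by blast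
qed

lemma mob_aux_fuel_irrelevant:
  assumes "weak_le u v" "card (Inv v) - card (Inv u) < m" "card (Inv v) - card (Inv u) < m'"
  shows "mob_aux m u v = mob_aux m' u v"
  using assms
proof (induct m arbitrary: m' v)
  case (Suc m)
  obtain m0 where m': "m' = Suc m0"
    using Suc.prems(3) by (cases m') auto
  have "(\<Sum>w\<in>{w. weak_le u w \<and> weak_lt w v}. mob_aux m u w) =
      (\<Sum>w\<in>{w. weak_le u w \<and> weak_lt w v}. mob_aux m0 u w)"
  proof (rule sum.cong[OF refl])
    fix w assume w: "w \<in> {w. weak_le u w \<and> weak_lt w v}"
    then have "card (Inv w) < card (Inv v)" "card (Inv u) \<le> card (Inv w)"
      using card_Inv_strict_mono card_Inv_mono by auto
    then have "card (Inv w) - card (Inv u) < m" "card (Inv w) - card (Inv u) < m0"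
      using Suc.prems m' by linarith+
    then show "mob_aux m u w = mob_aux m0 u w"
      using Suc.hyps w by blast
  qed
  then show ?case
    unfolding m' mob_aux.simps(2) by (simp only:)
qed simp

lemma mobius_refl: "is_perm u \<Longrightarrow> mobius u u = 1"
  by (simp add: mobius_def)

lemma finite_weak_le_interval: "finite {w. weak_le u w \<and> P w}"
  by (rule finite_subset[OF _ finite_weak_le_upset[of u]]) auto

lemma mobius_rec:
  assumes "weak_lt u v"
  shows "mobius u v = - (\<Sum>w\<in>{w. weak_le u w \<and> weak_lt w v}. mobius u w)"
proof -
  have "mobius u v = - (\<Sum>w\<in>{w. weak_le u w \<and> weak_lt w v}. mob_aux (fact (length v)) u w)"
    using assms by (simp add: mobius_def weak_lt_def)
  also have "(\<Sum>w\<in>{w. weak_le u w \<and> weak_lt w v}. mob_aux (fact (length v)) u w) =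
      (\<Sum>w\<in>{w. weak_le u w \<and> weak_lt w v}. mobius u w)"
  proof (rule sum.cong[OF refl])
    fix w assume w: "w \<in> {w. weak_le u w \<and> weak_lt w v}"
    then have "card (Inv w) < card (Inv v)" "length w = length v"
      using card_Inv_strict_mono by (auto simp: weak_lt_def weak_le_def)
    then have "card (Inv w) - card (Inv u) < fact (length v)"
      using card_Inv_le_fact[of v] by linarith
    then show "mob_aux (fact (length v)) u w = mobius u w"
      unfolding mobius_def using w \<open>length w = length v\<close> by (intro mob_aux_fuel_irrelevant) auto
  qed
  finally show ?thesis .
qed

lemma mobius_sum_interval:
  assumes "weak_le u v"
  shows "(\<Sum>w\<in>{w. weak_le u w \<and> weak_le w v}. mobius u w) = (if u = v then 1 else 0)"
proof (cases "u = v")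
  case True
  then have "{w. weak_le u w \<and> weak_le w v} = {u}"
    using assms weak_le_antisym by blast
  then show ?thesis
    using True assms by (simp add: mobius_refl weak_leD)
next
  case False
  have "{w. weak_le u w \<and> weak_le w v} = insert v {w. weak_le u w \<and> weak_lt w v}"
    using assms weak_le_refl[of v] weak_leD[OF assms] by (auto simp: weak_lt_def)
  then have "(\<Sum>w\<in>{w. weak_le u w \<and> weak_le w v}. mobius u w) =
      mobius u v + (\<Sum>w\<in>{w. weak_le u w \<and> weak_lt w v}. mobius u w)"
    by (simp add: finite_weak_le_interval weak_lt_def)
  then show ?thesis
    using mobius_rec[of u v] False assms by (simp add: weak_lt_def)
qed

lemma sum_mobius_upset_below:
  assumes "weak_le u w"
  shows "(\<Sum>v\<in>{v. weak_le u v}. if weak_le v w then of_int (mobius u v) else 0 :: rat) = (if u = w then 1 else 0)"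
proof -
  have "{v. weak_le u v \<and> weak_le v w} = {v. weak_le u v} \<inter> {v. weak_le v w}"
    by auto
  then have "(\<Sum>v\<in>{v. weak_le u v}. if weak_le v w then of_int (mobius u v) else 0 :: rat) =
      of_int (\<Sum>v\<in>{v. weak_le u v \<and> weak_le v w}. mobius u v)"
    using sum.inter_restrict[OF finite_weak_le_upset, of "\<lambda>v. of_int (mobius u v) :: rat" u "{v. weak_le v w}"]
    by simp
  also have "(\<Sum>v\<in>{v. weak_le u v \<and> weak_le v w}. mobius u v) = (if u = w then 1 else 0)"
    by (rule mobius_sum_interval[OF assms])
  finally show ?thesis
    by simp
qed

lemma mobius_inversion:
  fixes H :: "nat list \<Rightarrow> 'a \<Rightarrow> rat"
  assumes x: "is_perm x"
  shows "(\<Sum>v\<in>{v. weak_le x v}. scal (of_int (mobius x v)) (\<Sum>w\<in>{w. weak_le v w}. H w)) = H x"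
proof (rule ext)
  fix z
  define U where "U = {v. weak_le x v}"
  have fin: "finite U"
    unfolding U_def by (rule finite_weak_le_upset)
  have upset: "(\<Sum>w\<in>{w. weak_le v w}. H w z) = (\<Sum>w\<in>U. if weak_le v w then H w z else 0)"
    if "v \<in> U" for v
  proof -
    have "{w. weak_le v w} = U \<inter> {w. weak_le v w}"
      using that weak_le_trans by (auto simp: U_def)
    then show ?thesis
      using sum.inter_restrict[OF fin, of "\<lambda>w. H w z" "{w. weak_le v w}"] by simp
  qed
  have interval: "(\<Sum>v\<in>U. if weak_le v w then of_int (mobius x v) else 0 :: rat) = (if x = w then 1 else 0)"
    if "w \<in> U" for w
    using sum_mobius_upset_below[of x w] that by (simp add: U_def)
  have "(\<Sum>v\<in>U. scal (of_int (mobius x v)) (\<Sum>w\<in>{w. weak_le v w}. H w)) z =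
      (\<Sum>v\<in>U. \<Sum>w\<in>U. if weak_le v w then of_int (mobius x v) * H w z else 0)"
    by (simp add: sum_apply scal_apply upset sum_distrib_left if_distrib[of "\<lambda>t. _ * t"] cong: if_cong)
  also have "\<dots> = (\<Sum>w\<in>U. (\<Sum>v\<in>U. if weak_le v w then of_int (mobius x v) else 0) * H w z)"
    by (subst sum.swap) (simp add: sum_distrib_right if_distrib[of "\<lambda>t. t * _"] cong: if_cong)
  also have "\<dots> = (\<Sum>w\<in>U. if x = w then H w z else 0)"
    by (rule sum.cong[OF refl]) (simp add: interval)
  also have "\<dots> = H x z"
    using fin weak_le_refl[OF x] by (simp add: U_def)
  finally show "(\<Sum>v\<in>{v. weak_le x v}. scal (of_int (mobius x v)) (\<Sum>w\<in>{w. weak_le v w}. H w)) z = H x z"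
    by (simp add: U_def)
qed

lemma MM_apply: "MM u v = (if weak_le u v then of_int (mobius u v) else 0)"
  unfolding MM_def by (simp add: sum_scal_FF_apply finite_weak_le_upset)

lemma MM_self: "is_perm u \<Longrightarrow> MM u u = 1"
  by (simp add: MM_apply weak_le_refl mobius_refl)

lemma MM_nonzero_imp_weak_le: "MM u v \<noteq> 0 \<Longrightarrow> weak_le u v"
  by (simp add: MM_apply split: if_splits)

lemma MM_in_SSym: "MM u \<in> SSym"
proof -
  have "fsupp (MM u) \<subseteq> {v. weak_le u v}"
    using MM_nonzero_imp_weak_le by (auto simp: fsupp_def)
  then show ?thesis
    using finite_weak_le_upset by (auto simp: SSym_def weak_le_def intro: finite_subset)
qed

lemma finite_fsupp_MM: "finite (fsupp (MM u))"
  using MM_in_SSym by (simp add: SSym_def)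

lemma lin_ext_MM: "lin_ext P (MM u) = (\<Sum>v\<in>{v. weak_le u v}. scal (of_int (mobius u v)) (P v))"
  unfolding MM_def by (rule lin_ext_sum_scal_FF)

text \<open>By unitriangularity, downward induction on the number of inversions.\<close>

lemma FF_in_span_MM:
  assumes "is_perm u"
  shows "FF u \<in> rat_fun.span (MM ` {u. is_perm u})"
  using assms
proof (induct "length u * length u - card (Inv u)" arbitrary: u rule: less_induct)
  case less
  define V where "V = {v. weak_le u v} - {u}"
  have fin: "finite V"
    unfolding V_def using finite_weak_le_upset by simp
  have upset: "{v. weak_le u v} = insert u V" and "u \<notin> V"
    using less.prems weak_le_refl by (auto simp: V_def)
  have "MM u = scal (of_int (mobius u u)) (FF u) + (\<Sum>v\<in>V. scal (of_int (mobius u v)) (FF v))"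
    unfolding MM_def upset sum.insert[OF fin \<open>u \<notin> V\<close>] ..
  then have FF_eq: "FF u = MM u - (\<Sum>v\<in>V. scal (of_int (mobius u v)) (FF v))"
    using less.prems by (simp add: mobius_refl)
  have "FF v \<in> rat_fun.span (MM ` {u. is_perm u})" if v: "v \<in> V" for v
  proof -
    have lt: "weak_lt u v"
      using v by (auto simp: V_def weak_lt_def)
    then have len: "length v = length u" and perm: "is_perm v"
      by (auto simp: weak_lt_def weak_le_def)
    have "card (Inv v) \<le> card ({1..length v} \<times> {1..length v})"
      by (rule card_mono) (auto simp: Inv_def)
    then have "length v * length v - card (Inv v) < length u * length u - card (Inv u)"
      using card_Inv_strict_mono[OF lt] len by simp
    then show ?thesis
      using less.hyps perm by blast
  qed
  then have "(\<Sum>v\<in>V. scal (of_int (mobius u v)) (FF v)) \<in> rat_fun.span (MM ` {u. is_perm u})"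
    by (intro rat_fun.span_sum rat_fun.span_scale)
  moreover have "MM u \<in> rat_fun.span (MM ` {u. is_perm u})"
    using less.prems by (intro rat_fun.span_base) simp
  ultimately show ?case
    unfolding FF_eq by (rule rat_fun.span_diff[rotated])
qed

lemma SSym_eq_span_MM: "SSym = rat_fun.span (MM ` {u. is_perm u})"
proof
  show "rat_fun.span (MM ` {u. is_perm u}) \<subseteq> SSym"
    using MM_in_SSym by (intro rat_fun.span_minimal subspace_SSym) auto
next
  show "SSym \<subseteq> rat_fun.span (MM ` {u. is_perm u})"
  proof
    fix f assume f: "f \<in> SSym"
    then have "f = (\<Sum>u\<in>fsupp f. scal (f u) (FF u))"
      by (simp add: SSym_def expand_FF)
    moreover have "FF u \<in> rat_fun.span (MM ` {u. is_perm u})" if "u \<in> fsupp f" for u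
      using f that FF_in_span_MM by (auto simp: SSym_def)
    ultimately show "f \<in> rat_fun.span (MM ` {u. is_perm u})"
      by (metis (no_types, lifting) rat_fun.span_scale rat_fun.span_sum)
  qed
qed

lemma FF_eq_sum_MM:
  assumes u: "is_perm u"
  shows "FF u = (\<Sum>w\<in>{w. weak_le u w}. MM w)"
proof -
  define G where "G u = (\<Sum>w\<in>{w. weak_le u w}. MM w)" for u
  have "lin_ext G (FF u) = lin_ext FF (FF u)"
  proof (rule lin_ext_eq_on_span[OF _ _ FF_in_span_MM[OF u]])
    show "MM ` {u. is_perm u} \<subseteq> {f. finite (fsupp f)}"
      using finite_fsupp_MM by blast
    fix x assume "x \<in> MM ` {u. is_perm u}"
    then obtain v where v: "is_perm v" "x = MM v"
      by blast
    have "lin_ext G (MM v) = MM v"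
      unfolding lin_ext_MM G_def by (rule mobius_inversion[OF v(1)])
    also have "\<dots> = lin_ext FF (MM v)"
      unfolding lin_ext_MM by (simp only: MM_def)
    finally show "lin_ext G x = lin_ext FF x"
      using v(2) by simp
  qed
  then show ?thesis
    by (simp add: lin_ext_FF G_def)
qed

section \<open>Tensor words\<close>

definition tensor_cons :: "(nat list \<Rightarrow> rat) \<Rightarrow> (nat list list \<Rightarrow> rat) \<Rightarrow> nat list list \<Rightarrow> rat" where
  "tensor_cons v t = (\<lambda>w. case w of [] \<Rightarrow> 0 | x # xs \<Rightarrow> v x * t xs)"

lemma tpow_Nil: "tpow [] = (\<lambda>w. if w = [] then 1 else 0)"
  by (simp add: tpow_def fun_eq_iff)

lemma tpow_Cons: "tpow (v # vs) = tensor_cons v (tpow vs)"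
proof (rule ext)
  fix w
  show "tpow (v # vs) w = tensor_cons v (tpow vs) w"
  proof (cases w)
    case (Cons x xs)
    show ?thesis
      unfolding Cons tpow_def tensor_cons_def length_Cons list.case
      by (simp only: prod.lessThan_Suc_shift) simp
  qed (simp add: tpow_def tensor_cons_def)
qed

lemma tpow_at_Nil: "tpow vs [] = (if vs = [] then 1 else 0)"
  by (simp add: tpow_def)

lemma tpow_nonzero_imp_length: "tpow vs w \<noteq> 0 \<Longrightarrow> length w = length vs"
  by (simp add: tpow_def split: if_splits)

lemma module_hom_tensor_cons_left: "module_hom scal scal (\<lambda>v. tensor_cons v t)"
  unfolding module_hom_iff
  by (auto simp: rat_fun.module_axioms tensor_cons_def scal_def fun_eq_iff distrib_right mult.assoc
      split: list.splits)

lemma module_hom_tensor_cons_right: "module_hom scal scal (tensor_cons v)"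
  unfolding module_hom_iff
  by (auto simp: rat_fun.module_axioms tensor_cons_def scal_def fun_eq_iff distrib_left
      mult.left_commute split: list.splits)

lemma tpow_in_span:
  assumes "\<forall>v\<in>set vs. v \<in> rat_fun.span G"
  shows "tpow vs \<in> rat_fun.span {tpow gs | gs. length gs = length vs \<and> set gs \<subseteq> G}"
  using assms
proof (induct vs)
  case Nil
  show ?case
    by (rule rat_fun.span_base) auto
next
  case (Cons v vs)
  let ?H = "{tpow gs | gs. length gs = length vs \<and> set gs \<subseteq> G}"
  let ?C = "{tpow gs | gs. length gs = length (v # vs) \<and> set gs \<subseteq> G}"
  have step: "tensor_cons g (tpow vs) \<in> rat_fun.span ?C" if g: "g \<in> G" for g
  proof -
    have "tensor_cons g (tpow vs) \<in> tensor_cons g ` rat_fun.span ?H"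
      using Cons by simp
    also have "\<dots> = rat_fun.span (tensor_cons g ` ?H)"
      by (rule module_hom.span_image[OF module_hom_tensor_cons_right, symmetric])
    also have "\<dots> \<subseteq> rat_fun.span ?C"
    proof (rule rat_fun.span_mono, rule subsetI)
      fix y assume "y \<in> tensor_cons g ` ?H"
      then obtain gs where "length gs = length vs" "set gs \<subseteq> G" "y = tpow (g # gs)"
        by (auto simp: tpow_Cons)
      then show "y \<in> ?C"
        using g by (intro CollectI exI[of _ "g # gs"]) auto
    qed
    finally show ?thesis .
  qed
  have "tensor_cons v (tpow vs) \<in> (\<lambda>v. tensor_cons v (tpow vs)) ` rat_fun.span G"
    using Cons.prems by simp
  also have "\<dots> = rat_fun.span ((\<lambda>v. tensor_cons v (tpow vs)) ` G)"
    by (rule module_hom.span_image[OF module_hom_tensor_cons_left, symmetric])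
  also have "\<dots> \<subseteq> rat_fun.span ?C"
    using step by (intro rat_fun.span_minimal) auto
  finally show ?case
    by (simp add: tpow_Cons)
qed

lemma Vpow_vanishes_off_length:
  assumes "g \<in> Vpow V k" "length w \<noteq> k"
  shows "g w = 0"
proof -
  have "rat_fun.subspace {g. \<forall>w. length w \<noteq> k \<longrightarrow> g w = 0}"
    by (simp add: rat_fun.subspace_def scal_apply)
  moreover have "{tpow vs | vs. length vs = k \<and> set vs \<subseteq> V} \<subseteq> {g. \<forall>w. length w \<noteq> k \<longrightarrow> g w = 0}"
    using tpow_nonzero_imp_length by fastforce
  ultimately have "Vpow V k \<subseteq> {g. \<forall>w. length w \<noteq> k \<longrightarrow> g w = 0}"
    unfolding Vpow_def lspan_eq_span by (rule rat_fun.span_minimal[rotated])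
  then show ?thesis
    using assms by blast
qed

lemma DeltaQ_tpow_apply:
  "tpow vs (x1 @ x2) = (\<Sum>j\<in>{0..length vs}. tpow (take j vs) x1 * tpow (drop j vs) x2)"
proof (induct x1 arbitrary: vs)
  case Nil
  have "(\<Sum>j\<in>{0..length vs}. tpow (take j vs) [] * tpow (drop j vs) x2) =
      (\<Sum>j\<in>{0..length vs}. if j = 0 then tpow vs x2 else 0)"
    by (rule sum.cong[OF refl]) (auto simp: tpow_at_Nil)
  then show ?case
    by simp
next
  case (Cons a x1)
  show ?case
  proof (cases vs)
    case (Cons v vs')
    have "tpow vs ((a # x1) @ x2) = v a * (\<Sum>j\<in>{0..length vs'}. tpow (take j vs') x1 * tpow (drop j vs') x2)"
      using Cons Cons.hyps by (simp add: tpow_Cons tensor_cons_def)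
    also have "\<dots> = (\<Sum>j\<in>{0..length vs'}. tpow (take (Suc j) vs) (a # x1) * tpow (drop (Suc j) vs) x2)"
      using Cons by (simp add: sum_distrib_left tpow_Cons tensor_cons_def mult.assoc)
    also have "\<dots> = (\<Sum>j\<in>{0..length vs}. tpow (take j vs) (a # x1) * tpow (drop j vs) x2)"
    proof -
      have "length vs = Suc (length vs')" "tpow (take 0 vs) (a # x1) = 0"
        using Cons by (simp_all add: tpow_def)
      then show ?thesis
        by (simp only: sum.atLeast0_atMost_Suc_shift) simp
    qed
    finally show ?thesis .
  qed (simp add: tpow_Nil)
qed

lemma DeltaQ_tpow:
  "DeltaQ (tpow vs) = (\<Sum>j\<in>{0..length vs}. tensor (tpow (take j vs)) (tpow (drop j vs)))"
  by (rule ext) (auto simp: DeltaQ_def tensor_def sum_apply DeltaQ_tpow_apply)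

lemma DeltaQ_sum: "DeltaQ (\<Sum>i\<in>I. g i) = (\<Sum>i\<in>I. DeltaQ (g i))"
  by (rule ext) (auto simp: DeltaQ_def sum_apply)

lemma DeltaQ_scal: "DeltaQ (scal c g) = scal c (DeltaQ g)"
  by (rule ext) (auto simp: DeltaQ_def scal_apply)

lemma tensor_sum_sum: "tensor (\<Sum>i\<in>I. f i) (\<Sum>j\<in>J. g j) = (\<Sum>i\<in>I. \<Sum>j\<in>J. tensor (f i) (g j))"
  by (rule ext) (auto simp: tensor_def sum_apply sum_product)

lemma tensor_FF: "tensor (FF a) (FF b) = (\<lambda>z. if z = (a, b) then 1 else 0)"
  by (rule ext) (auto simp: tensor_def FF_def split: if_splits)

section \<open>The isomorphism\<close>

definition MM_tensor :: "nat list \<Rightarrow> nat list list \<Rightarrow> rat" where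
  "MM_tensor w = tpow (map MM (skew_blocks w))"

lemma MM_tensor_at_blocks: "is_perm w \<Longrightarrow> MM_tensor w (skew_blocks w) = 1"
  using skew_blocks[of w] by (simp add: MM_tensor_def tpow_def MM_self skew_indecomposable_def)

lemma MM_tensor_nonzero_imp:
  assumes "MM_tensor w x \<noteq> 0"
  shows "length x = length (skew_blocks w)" "\<forall>i<length x. weak_le (skew_blocks w ! i) (x ! i)"
proof -
  show len: "length x = length (skew_blocks w)"
    using assms by (simp add: MM_tensor_def tpow_def split: if_splits)
  then have "\<forall>i<length x. MM (skew_blocks w ! i) (x ! i) \<noteq> 0"
    using assms by (simp add: MM_tensor_def tpow_def)
  then show "\<forall>i<length x. weak_le (skew_blocks w ! i) (x ! i)"
    using MM_nonzero_imp_weak_le by blast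
qed

lemma MM_tensor_independent:
  assumes W: "finite W" "W \<subseteq> {u. is_perm u}"
    and zero: "(\<Sum>w\<in>W. scal (c w) (MM_tensor w)) = 0"
  shows "\<forall>w\<in>W. c w = 0"
proof (rule triangular_independent[OF W(1) _ _ zero, where key = skew_blocks
      and rank = "\<lambda>w. \<Sum>i<length (skew_blocks w). card (Inv (skew_blocks w ! i))"])
  fix i assume "i \<in> W"
  then show "MM_tensor i (skew_blocks i) \<noteq> 0"
    using W MM_tensor_at_blocks by auto
next
  fix i j assume ij: "i \<in> W" "j \<in> W" "i \<noteq> j" "MM_tensor i (skew_blocks j) \<noteq> 0"
  note nonzero = MM_tensor_nonzero_imp[OF ij(4)]
  have "is_perm i" "is_perm j"
    using ij(1,2) W(2) by auto
  then have "skew_blocks i \<noteq> skew_blocks j"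
    using skew_blocks(2)[of i] skew_blocks(2)[of j] ij(3) by metis
  then obtain k where k: "k < length (skew_blocks j)" "skew_blocks i ! k \<noteq> skew_blocks j ! k"
    using nonzero(1) nth_equalityI by metis
  show "(\<Sum>k<length (skew_blocks i). card (Inv (skew_blocks i ! k))) <
      (\<Sum>k<length (skew_blocks j). card (Inv (skew_blocks j ! k)))"
    unfolding nonzero(1)[symmetric]
  proof (rule sum_strict_mono_ex1)
    show "\<forall>x\<in>{..<length (skew_blocks j)}. card (Inv (skew_blocks i ! x)) \<le> card (Inv (skew_blocks j ! x))"
      using nonzero(2) card_Inv_mono by auto
    show "\<exists>a\<in>{..<length (skew_blocks j)}. card (Inv (skew_blocks i ! a)) < card (Inv (skew_blocks j ! a))"
      using nonzero(2) k card_Inv_strict_mono by (auto simp: weak_lt_def)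
  qed simp
qed

definition Phi :: "(nat list \<Rightarrow> rat) \<Rightarrow> nat list list \<Rightarrow> rat" where
  "Phi = lin_ext (\<lambda>u. \<Sum>w\<in>{w. weak_le u w}. MM_tensor w)"

lemma Phi_FF: "Phi (FF u) = (\<Sum>w\<in>{w. weak_le u w}. MM_tensor w)"
  by (simp add: Phi_def lin_ext_FF)

lemma Phi_MM: "is_perm w \<Longrightarrow> Phi (MM w) = MM_tensor w"
  unfolding Phi_def lin_ext_MM by (rule mobius_inversion)

lemma Phi_span_MM:
  assumes "A \<subseteq> {u. is_perm u}"
  shows "Phi ` rat_fun.span (MM ` A) = rat_fun.span (MM_tensor ` A)"
proof -
  have "Phi ` MM ` A = MM_tensor ` A"
    unfolding image_image using assms Phi_MM by (intro image_cong) auto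
  then show ?thesis
    unfolding Phi_def using finite_fsupp_MM by (subst lin_ext_span_image) auto
qed

lemma MM_tensor_in_Vpow:
  assumes "w \<in> Sk k"
  shows "MM_tensor w \<in> Vpow (SSymk 1) k"
proof -
  have w: "is_perm w" "length (skew_blocks w) = k"
    using assms by (auto simp: Sk_eq)
  have "set (map MM (skew_blocks w)) \<subseteq> SSymk 1"
  proof
    fix g assume "g \<in> set (map MM (skew_blocks w))"
    then obtain c where "c \<in> set (skew_blocks w)" "g = MM c"
      by auto
    then show "g \<in> SSymk 1"
      using skew_blocks(1)[OF w(1)] skew_indecomposable_iff_Sk1
      unfolding SSymk_def lspan_eq_span by (auto intro: rat_fun.span_base)
  qed
  then show ?thesis
    unfolding Vpow_def lspan_eq_span MM_tensor_def using w(2)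
    by (intro rat_fun.span_base CollectI exI[of _ "map MM (skew_blocks w)"]) auto
qed

lemma tpow_MM_in_MM_tensor_image:
  assumes "length gs = k" "set gs \<subseteq> MM ` Sk 1"
  shows "tpow gs \<in> MM_tensor ` Sk k"
proof -
  define cs where "cs = map (inv_into (Sk 1) MM) gs"
  have gs: "map MM cs = gs"
    unfolding cs_def using assms(2) by (simp add: map_idI f_inv_into_f subset_iff)
  have indec: "\<forall>c\<in>set cs. skew_indecomposable c"
    unfolding cs_def using assms(2) skew_indecomposable_iff_Sk1 by (auto intro: inv_into_into)
  then have "skew_sum_list cs \<in> Sk k"
    using skew_blocks_skew_sum_list[OF indec] is_perm_skew_sum_list gs assms(1)
    by (auto simp: Sk_eq skew_indecomposable_def)
  moreover have "tpow gs = MM_tensor (skew_sum_list cs)"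
    using skew_blocks_skew_sum_list[OF indec] gs by (simp add: MM_tensor_def)
  ultimately show ?thesis
    by blast
qed

lemma Vpow_eq_span_MM_tensor: "Vpow (SSymk 1) k = rat_fun.span (MM_tensor ` Sk k)"
proof
  show "Vpow (SSymk 1) k \<subseteq> rat_fun.span (MM_tensor ` Sk k)"
    unfolding Vpow_def lspan_eq_span
  proof (rule rat_fun.span_minimal[OF subsetI rat_fun.subspace_span])
    fix y assume "y \<in> {tpow vs |vs. length vs = k \<and> set vs \<subseteq> SSymk 1}"
    then obtain vs where vs: "y = tpow vs" "length vs = k" "set vs \<subseteq> SSymk 1"
      by blast
    have "tpow vs \<in> rat_fun.span {tpow gs | gs. length gs = length vs \<and> set gs \<subseteq> MM ` Sk 1}"
      using vs(3) by (intro tpow_in_span) (auto simp: SSymk_def lspan_eq_span)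
    also have "\<dots> \<subseteq> rat_fun.span (MM_tensor ` Sk k)"
      using tpow_MM_in_MM_tensor_image[of _ k] vs(2) by (intro rat_fun.span_mono) auto
    finally show "y \<in> rat_fun.span (MM_tensor ` Sk k)"
      using vs(1) by simp
  qed
next
  show "rat_fun.span (MM_tensor ` Sk k) \<subseteq> Vpow (SSymk 1) k"
    using MM_tensor_in_Vpow by (intro rat_fun.span_minimal) (auto simp: Vpow_def lspan_eq_span)
qed

lemma Sk_subset_perms: "Sk k \<subseteq> {u. is_perm u}"
  by (auto simp: Sk_eq)

lemma UN_Sk: "(\<Union>k. Sk k) = {u. is_perm u}"
  by (auto simp: Sk_eq)

lemma Phi_SSymk: "Phi ` SSymk k = Vpow (SSymk 1) k"
proof -
  have "Phi ` SSymk k = rat_fun.span (MM_tensor ` Sk k)"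
    unfolding SSymk_def lspan_eq_span by (rule Phi_span_MM[OF Sk_subset_perms])
  then show ?thesis
    by (simp only: Vpow_eq_span_MM_tensor)
qed

lemma span_UN_span: "rat_fun.span (\<Union>k. rat_fun.span (A k)) = rat_fun.span (\<Union>k. A k)"
proof
  have "rat_fun.span (A k) \<subseteq> rat_fun.span (\<Union>k. A k)" for k
    by (rule rat_fun.span_mono) blast
  then show "rat_fun.span (\<Union>k. rat_fun.span (A k)) \<subseteq> rat_fun.span (\<Union>k. A k)"
    by (intro rat_fun.span_minimal) auto
  show "rat_fun.span (\<Union>k. A k) \<subseteq> rat_fun.span (\<Union>k. rat_fun.span (A k))"
    using rat_fun.span_superset by (intro rat_fun.span_mono) blast
qed

lemma Phi_SSym: "Phi ` SSym = QV (SSymk 1)"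
proof -
  have "QV (SSymk 1) = rat_fun.span (\<Union>k. rat_fun.span (MM_tensor ` Sk k))"
    unfolding QV_def Vpow_eq_span_MM_tensor lspan_eq_span ..
  also have "\<dots> = rat_fun.span (\<Union>k. MM_tensor ` Sk k)"
    by (rule span_UN_span)
  also have "(\<Union>k. MM_tensor ` Sk k) = MM_tensor ` {u. is_perm u}"
    unfolding UN_Sk[symmetric] by blast
  finally show ?thesis
    unfolding SSym_eq_span_MM using Phi_span_MM[of "{u. is_perm u}"] by simp
qed

lemma Phi_add: "x \<in> SSym \<Longrightarrow> y \<in> SSym \<Longrightarrow> Phi (x + y) = Phi x + Phi y"
  unfolding Phi_def by (rule lin_ext_add) (simp_all add: SSym_def)

lemma Phi_scal: "x \<in> SSym \<Longrightarrow> Phi (scal c x) = scal c (Phi x)"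
  unfolding Phi_def by (rule lin_ext_scal) (simp add: SSym_def)

lemma Phi_eq_zero_imp:
  assumes x: "x \<in> SSym" and zero: "Phi x = 0"
  shows "x = 0"
proof -
  have "x \<in> rat_fun.span (MM ` {u. is_perm u})"
    using x SSym_eq_span_MM by simp
  then obtain W c where W: "finite W" "W \<subseteq> {u. is_perm u}" "x = (\<Sum>w\<in>W. scal (c w) (MM w))"
    by (elim span_image_explicit[THEN exE]) blast
  have "Phi x = (\<Sum>w\<in>W. scal (c w) (Phi (MM w)))"
    unfolding W(3) Phi_def using finite_fsupp_MM by (rule lin_ext_sum_scal)
  also have "\<dots> = (\<Sum>w\<in>W. scal (c w) (MM_tensor w))"
    using W(2) Phi_MM by (intro sum.cong) auto
  finally have "\<forall>w\<in>W. c w = 0"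
    using zero MM_tensor_independent[OF W(1,2)] by simp
  then show "x = 0"
    unfolding W(3) by (simp add: scal_def fun_eq_iff)
qed

lemma inj_on_Phi: "inj_on Phi SSym"
proof (rule inj_onI)
  fix x y assume x: "x \<in> SSym" and y: "y \<in> SSym" and eq: "Phi x = Phi y"
  have y': "scal (-1) y \<in> SSym"
    using y by (rule rat_fun.subspace_scale[OF subspace_SSym])
  have "Phi (x + scal (-1) y) = Phi x + scal (-1) (Phi y)"
    by (simp only: Phi_add[OF x y'] Phi_scal[OF y])
  then have "Phi (x + scal (-1) y) = 0"
    using eq by (simp add: fun_eq_iff scal_apply)
  then have "x + scal (-1) y = 0"
    using rat_fun.subspace_add[OF subspace_SSym x y'] by (rule Phi_eq_zero_imp[rotated])
  then show "x = y"
    by (simp add: fun_eq_iff scal_apply)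
qed

section \<open>Compatibility with the coproducts\<close>

definition skew_factors_above :: "nat list \<Rightarrow> (nat list \<times> nat list) set" where
  "skew_factors_above v = {(a, b). is_perm a \<and> is_perm b \<and> weak_le v (a \<ominus> b)}"

lemma finite_skew_factors_above: "finite (skew_factors_above v)"
proof -
  have "skew_factors_above v \<subseteq>
      {u. is_perm u \<and> length u \<le> length v} \<times> {u. is_perm u \<and> length u \<le> length v}"
    by (auto simp: skew_factors_above_def dest!: weak_leD)
  then show ?thesis
    using finite_perms_length_le finite_subset by blast
qed

text \<open>The two reindexings behind the compatibility of Phi with the coproducts: a pair (a, b) with
  v below a \<ominus> b arises once from a cut of v at position p (weak_le_skew_sum_iff), and once
  from a cut of the skew blocks of some w above v.\<close>

lemma sum_cuts_upsets_eq:
  fixes f :: "nat list \<Rightarrow> nat list \<Rightarrow> 'c::comm_monoid_add"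
  assumes v: "is_perm v"
  shows "(\<Sum>p\<in>{0..length v}. \<Sum>a\<in>{a. weak_le (st (take p v)) a}. \<Sum>b\<in>{b. weak_le (st (drop p v)) b}. f a b)
       = (\<Sum>(a, b)\<in>skew_factors_above v. f a b)"
proof -
  define S where "S = Sigma {0..length v} (\<lambda>p. {a. weak_le (st (take p v)) a} \<times> {b. weak_le (st (drop p v)) b})"
  have "(\<Sum>p\<in>{0..length v}. \<Sum>a\<in>{a. weak_le (st (take p v)) a}. \<Sum>b\<in>{b. weak_le (st (drop p v)) b}. f a b)
      = (\<Sum>(p, a, b)\<in>S. f a b)"
    unfolding S_def by (simp add: sum.Sigma sum.cartesian_product finite_weak_le_upset split_def)
  also have "\<dots> = (\<Sum>(a, b)\<in>skew_factors_above v. f a b)"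
  proof (rule sum.reindex_bij_witness[where j = snd and i = "\<lambda>(a, b). (length a, a, b)"])
    fix z assume "z \<in> S"
    then obtain p a b where z: "z = (p, a, b)" "p \<le> length v"
      "weak_le (st (take p v)) a" "weak_le (st (drop p v)) b"
      by (auto simp: S_def)
    then have "length a = p" "is_perm a" "is_perm b" "length b = length v - p"
      using weak_leD by fastforce+
    then show "(\<lambda>(a, b). (length a, a, b)) (snd z) = z" "snd z \<in> skew_factors_above v"
      using z weak_le_skew_sum_iff[OF v, of a b] by (auto simp: skew_factors_above_def)
    show "(case snd z of (a, b) \<Rightarrow> f a b) = (case z of (p, a, b) \<Rightarrow> f a b)"
      using z(1) by simp
  next
    fix ab assume "ab \<in> skew_factors_above v"
    then obtain a b where ab: "ab = (a, b)" "is_perm a" "is_perm b" "weak_le v (a \<ominus> b)"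
      by (auto simp: skew_factors_above_def)
    moreover have "length v = length a + length b"
      using ab(4) weak_leD by fastforce
    ultimately show "snd ((\<lambda>(a, b). (length a, a, b)) ab) = ab"
      "(\<lambda>(a, b). (length a, a, b)) ab \<in> S"
      using weak_le_skew_sum_iff[OF v ab(2,3)] by (auto simp: S_def)
  qed
  finally show ?thesis .
qed

lemma sum_upset_block_cuts_eq:
  fixes f :: "nat list \<Rightarrow> nat list \<Rightarrow> 'c::comm_monoid_add"
  assumes v: "is_perm v"
  shows "(\<Sum>w\<in>{w. weak_le v w}. \<Sum>j\<in>{0..length (skew_blocks w)}.
            f (skew_sum_list (take j (skew_blocks w))) (skew_sum_list (drop j (skew_blocks w))))
       = (\<Sum>(a, b)\<in>skew_factors_above v. f a b)"
proof -
  define S where "S = Sigma {w. weak_le v w} (\<lambda>w. {0..length (skew_blocks w)})"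
  define cut where "cut = (\<lambda>(w, j). (skew_sum_list (take j (skew_blocks w)), skew_sum_list (drop j (skew_blocks w))))"
  have "(\<Sum>w\<in>{w. weak_le v w}. \<Sum>j\<in>{0..length (skew_blocks w)}.
            f (skew_sum_list (take j (skew_blocks w))) (skew_sum_list (drop j (skew_blocks w))))
      = (\<Sum>wj\<in>S. case_prod f (cut wj))"
    unfolding S_def cut_def by (subst sum.Sigma) (auto intro: finite_weak_le_upset simp: split_def)
  also have "\<dots> = (\<Sum>(a, b)\<in>skew_factors_above v. f a b)"
  proof (rule sum.reindex_bij_witness[where j = cut and i = "\<lambda>(a, b). (a \<ominus> b, length (skew_blocks a))"])
    fix wj assume "wj \<in> S"
    then obtain w j where wj: "wj = (w, j)" "weak_le v w" "j \<le> length (skew_blocks w)"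
      by (auto simp: S_def)
    then have w: "is_perm w"
      using weak_leD by blast
    show "(\<lambda>(a, b). (a \<ominus> b, length (skew_blocks a))) (cut wj) = wj" "cut wj \<in> skew_factors_above v"
      using wj skew_blocks_cut[OF w, of j] by (auto simp: cut_def skew_factors_above_def)
  next
    fix ab assume "ab \<in> skew_factors_above v"
    then obtain a b where ab: "ab = (a, b)" "is_perm a" "is_perm b" "weak_le v (a \<ominus> b)"
      by (auto simp: skew_factors_above_def)
    then have "skew_blocks (a \<ominus> b) = skew_blocks a @ skew_blocks b"
      by (simp add: skew_blocks_skew_sum)
    then show "cut ((\<lambda>(a, b). (a \<ominus> b, length (skew_blocks a))) ab) = ab"
      "(\<lambda>(a, b). (a \<ominus> b, length (skew_blocks a))) ab \<in> S"
      using ab skew_blocks(2)[OF ab(2)] skew_blocks(2)[OF ab(3)] by (auto simp: cut_def S_def)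
  qed simp
  finally show ?thesis .
qed

lemma DeltaQ_MM_tensor:
  assumes w: "is_perm w"
  shows "DeltaQ (MM_tensor w) = (\<Sum>j\<in>{0..length (skew_blocks w)}.
      tensor (MM_tensor (skew_sum_list (take j (skew_blocks w)))) (MM_tensor (skew_sum_list (drop j (skew_blocks w)))))"
  unfolding MM_tensor_def[of w] DeltaQ_tpow
  by (simp add: MM_tensor_def skew_blocks_cut[OF w] take_map drop_map)

lemma tensor_map_eq_lin_ext:
  "tensor_map phi t = lin_ext (\<lambda>(a, b). tensor (phi (FF a)) (phi (FF b))) t"
  unfolding tensor_map_def lin_ext_def by (rule sum.cong) auto

lemma tensor_map_Phi_DeltaF:
  assumes u: "is_perm u"
  shows "tensor_map Phi (DeltaF u) = DeltaQ (Phi (FF u))"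
proof -
  have "tensor_map Phi (DeltaF u) =
      (\<Sum>p\<in>{0..length u}. tensor (Phi (FF (st (take p u)))) (Phi (FF (st (drop p u)))))"
    unfolding tensor_map_eq_lin_ext DeltaF_def tensor_FF
    by (subst lin_ext_sum) (auto simp: fsupp_def lin_ext_point)
  also have "\<dots> = (\<Sum>p\<in>{0..length u}. \<Sum>a\<in>{a. weak_le (st (take p u)) a}.
      \<Sum>b\<in>{b. weak_le (st (drop p u)) b}. tensor (MM_tensor a) (MM_tensor b))"
    by (simp add: Phi_FF tensor_sum_sum)
  also have "\<dots> = (\<Sum>(a, b)\<in>skew_factors_above u. tensor (MM_tensor a) (MM_tensor b))"
    by (rule sum_cuts_upsets_eq[OF u])
  also have "\<dots> = (\<Sum>w\<in>{w. weak_le u w}. \<Sum>j\<in>{0..length (skew_blocks w)}.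
      tensor (MM_tensor (skew_sum_list (take j (skew_blocks w)))) (MM_tensor (skew_sum_list (drop j (skew_blocks w)))))"
    by (rule sum_upset_block_cuts_eq[OF u, symmetric])
  also have "\<dots> = (\<Sum>w\<in>{w. weak_le u w}. DeltaQ (MM_tensor w))"
    by (rule sum.cong[OF refl]) (simp add: DeltaQ_MM_tensor weak_leD)
  also have "\<dots> = DeltaQ (Phi (FF u))"
    by (simp add: Phi_FF DeltaQ_sum)
  finally show ?thesis .
qed

lemma tensor_map_Phi_Delta:
  assumes x: "x \<in> SSym"
  shows "tensor_map Phi (Delta x) = DeltaQ (Phi x)"
proof -
  have perm: "\<forall>u\<in>fsupp x. is_perm u"
    using x by (simp add: SSym_def)
  have fin_DeltaF: "finite (fsupp (DeltaF u))" for u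
    unfolding DeltaF_def by (rule finite_subset[OF fsupp_sum]) (auto simp: tensor_FF fsupp_def)
  have "tensor_map Phi (Delta x) = (\<Sum>u\<in>fsupp x. scal (x u) (tensor_map Phi (DeltaF u)))"
    unfolding Delta_def tensor_map_eq_lin_ext using fin_DeltaF by (rule lin_ext_sum_scal)
  also have "\<dots> = (\<Sum>u\<in>fsupp x. scal (x u) (DeltaQ (Phi (FF u))))"
    using perm by (simp add: tensor_map_Phi_DeltaF)
  also have "\<dots> = DeltaQ (\<Sum>u\<in>fsupp x. scal (x u) (Phi (FF u)))"
    by (simp add: DeltaQ_sum DeltaQ_scal)
  also have "(\<Sum>u\<in>fsupp x. scal (x u) (Phi (FF u))) = Phi x"
    unfolding Phi_FF by (simp add: Phi_def lin_ext_def)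
  finally show ?thesis .
qed

lemma counitQ_Phi:
  assumes x: "x \<in> SSym"
  shows "counitQ (Phi x) = counit x"
proof -
  have perm: "\<forall>u\<in>fsupp x. is_perm u"
    using x by (simp add: SSym_def)
  have MM_tensor_Nil: "MM_tensor w [] = (if w = [] then 1 else 0)" if "is_perm w" for w
    using skew_blocks[OF that] by (auto simp: MM_tensor_def tpow_at_Nil)
  have Phi_FF_Nil: "Phi (FF u) [] = (if u = [] then 1 else 0)" if u: "is_perm u" for u
  proof -
    have "Phi (FF u) [] = (\<Sum>w\<in>{w. weak_le u w}. if w = [] then 1 else 0)"
      unfolding Phi_FF sum_apply by (rule sum.cong[OF refl]) (simp add: MM_tensor_Nil weak_leD)
    also have "\<dots> = (if [] \<in> {w. weak_le u w} then 1 else 0)"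
      by (simp add: finite_weak_le_upset)
    also have "([] \<in> {w. weak_le u w}) = (u = [])"
      using u weak_leD[of u "[]"] weak_le_refl[of u] by auto
    finally show ?thesis .
  qed
  have "counitQ (Phi x) = (\<Sum>u\<in>fsupp x. x u * Phi (FF u) [])"
    unfolding Phi_FF counitQ_def by (simp add: Phi_def lin_ext_def sum_apply scal_apply)
  also have "\<dots> = (\<Sum>u\<in>fsupp x. if u = [] then x u else 0)"
    by (rule sum.cong[OF refl]) (simp add: Phi_FF_Nil perm)
  also have "\<dots> = x []"
    using x by (simp add: SSym_def fsupp_def)
  finally show ?thesis
    by (simp add: counit_def)
qed

section \<open>The coalgebra grading\<close>

lemma DeltaF_eq_sum_MM:
  assumes v: "is_perm v"
  shows "DeltaF v = (\<Sum>(a, b)\<in>skew_factors_above v. tensor (MM a) (MM b))"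
proof -
  have "DeltaF v = (\<Sum>p\<in>{0..length v}. tensor (\<Sum>a\<in>{a. weak_le (st (take p v)) a}. MM a)
       (\<Sum>b\<in>{b. weak_le (st (drop p v)) b}. MM b))"
    unfolding DeltaF_def
    by (rule sum.cong[OF refl]) (simp add: FF_eq_sum_MM is_perm_st_take is_perm_st_drop v)
  also have "\<dots> = (\<Sum>(a, b)\<in>skew_factors_above v. tensor (MM a) (MM b))"
    unfolding tensor_sum_sum by (rule sum_cuts_upsets_eq[OF v])
  finally show ?thesis .
qed

lemma Delta_MM:
  assumes u: "is_perm u"
  shows "Delta (MM u) = (\<Sum>(a, b)\<in>{(a, b). is_perm a \<and> is_perm b \<and> a \<ominus> b = u}. tensor (MM a) (MM b))"
proof (rule ext)
  fix z
  define U where "U = {v. weak_le u v}"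
  define E where "E ab = tensor (MM (fst ab)) (MM (snd ab)) z" for ab
  have fin_F: "finite (skew_factors_above u)"
    by (rule finite_skew_factors_above)
  have DeltaF_apply: "DeltaF v z = (\<Sum>ab\<in>skew_factors_above u. if weak_le v (fst ab \<ominus> snd ab) then E ab else 0)"
    if v: "v \<in> U" for v
  proof -
    have "skew_factors_above v = skew_factors_above u \<inter> {ab. weak_le v (fst ab \<ominus> snd ab)}"
      using v weak_le_trans by (auto simp: U_def skew_factors_above_def)
    then show ?thesis
      using sum.inter_restrict[OF fin_F, of E] v weak_leD
      by (simp add: DeltaF_eq_sum_MM U_def sum_apply E_def split_def)
  qed
  have "Delta (MM u) z = (\<Sum>v\<in>U. of_int (mobius u v) * DeltaF v z)"
    unfolding Delta_eq_lin_ext lin_ext_MM U_def by (simp add: sum_apply scal_apply)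
  also have "\<dots> = (\<Sum>ab\<in>skew_factors_above u.
      (\<Sum>v\<in>U. if weak_le v (fst ab \<ominus> snd ab) then of_int (mobius u v) else 0) * E ab)"
    by (simp add: DeltaF_apply sum_distrib_left sum_distrib_right if_distrib[of "\<lambda>t. _ * t"]
        if_distrib[of "\<lambda>t. t * _"] sum.swap[of _ U] cong: if_cong)
  also have "\<dots> = (\<Sum>ab\<in>skew_factors_above u. if fst ab \<ominus> snd ab = u then E ab else 0)"
  proof (rule sum.cong[OF refl])
    fix ab assume "ab \<in> skew_factors_above u"
    then have "weak_le u (fst ab \<ominus> snd ab)"
      by (auto simp: skew_factors_above_def)
    then show "(\<Sum>v\<in>U. if weak_le v (fst ab \<ominus> snd ab) then of_int (mobius u v) else 0) * E ab =
        (if fst ab \<ominus> snd ab = u then E ab else 0)"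
      unfolding U_def by (auto simp: sum_mobius_upset_below)
  qed
  also have "\<dots> = (\<Sum>ab\<in>{ab \<in> skew_factors_above u. fst ab \<ominus> snd ab = u}. E ab)"
    by (simp add: sum.inter_filter[OF fin_F])
  also have "{ab \<in> skew_factors_above u. fst ab \<ominus> snd ab = u} = {(a, b). is_perm a \<and> is_perm b \<and> a \<ominus> b = u}"
    using weak_le_refl[OF u] by (auto simp: skew_factors_above_def)
  finally show "Delta (MM u) z = (\<Sum>(a, b)\<in>{(a, b). is_perm a \<and> is_perm b \<and> a \<ominus> b = u}. tensor (MM a) (MM b)) z"
    by (simp add: sum_apply E_def split_def)
qed

lemma MM_in_SSymk: "u \<in> Sk k \<Longrightarrow> MM u \<in> SSymk k"
  unfolding SSymk_def lspan_eq_span by (rule rat_fun.span_base) simp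

lemma Delta_SSymk:
  assumes x: "x \<in> SSymk k"
  shows "Delta x \<in> lspan (\<Union>i\<in>{0..k}. tensor_sp (SSymk i) (SSymk (k - i)))"
proof -
  let ?L = "rat_fun.span (\<Union>i\<in>{0..k}. tensor_sp (SSymk i) (SSymk (k - i)))"
  have "tensor (MM a) (MM b) \<in> ?L" if "is_perm a" "is_perm b" "a \<ominus> b \<in> Sk k" for a b
  proof -
    define i where "i = length (skew_blocks a)"
    have "length (skew_blocks b) = k - i" "i \<le> k"
      using that skew_blocks_skew_sum[of a b] by (auto simp: Sk_eq i_def)
    then have "MM a \<in> SSymk i" "MM b \<in> SSymk (k - i)"
      using that by (auto intro!: MM_in_SSymk simp: Sk_eq i_def)
    then have "tensor (MM a) (MM b) \<in> tensor_sp (SSymk i) (SSymk (k - i))"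
      unfolding tensor_sp_def lspan_eq_span by (intro rat_fun.span_base) blast
    then show ?thesis
      using \<open>i \<le> k\<close> by (intro rat_fun.span_base UN_I[of i]) auto
  qed
  then have "Delta (MM u) \<in> ?L" if "u \<in> Sk k" for u
    using that Delta_MM[of u] by (auto simp: Sk_eq intro!: rat_fun.span_sum)
  then have "rat_fun.span (Delta ` MM ` Sk k) \<subseteq> ?L"
    by (intro rat_fun.span_minimal) auto
  moreover have "Delta x \<in> rat_fun.span (Delta ` MM ` Sk k)"
    using x finite_fsupp_MM unfolding SSymk_def lspan_eq_span Delta_eq_lin_ext
    by (subst lin_ext_span_image[symmetric]) auto
  ultimately show ?thesis
    unfolding lspan_eq_span by blast
qed

lemma SSymk_subset_SSym: "SSymk k \<subseteq> SSym"
  unfolding SSymk_def lspan_eq_span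
  using MM_in_SSym by (intro rat_fun.span_minimal subspace_SSym) auto

text \<open>Phi maps the graded pieces into tensor powers of different degrees, which are supported
  on words of different lengths.\<close>

lemma SSymk_independent:
  assumes K: "finite K" and x: "\<forall>k\<in>K. x k \<in> SSymk k" and sum: "(\<Sum>k\<in>K. x k) = 0"
  shows "\<forall>k\<in>K. x k = 0"
proof
  fix k0 assume k0: "k0 \<in> K"
  have in_SSym: "x k \<in> SSym" if "k \<in> K" for k
    using x SSymk_subset_SSym that by blast
  have in_Vpow: "Phi (x k) \<in> Vpow (SSymk 1) k" if "k \<in> K" for k
    using x that Phi_SSymk by blast
  have "(\<Sum>k\<in>K. Phi (x k)) = Phi (\<Sum>k\<in>K. x k)"
    unfolding Phi_def using in_SSym by (intro lin_ext_sum[symmetric]) (simp add: SSym_def)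
  also have "\<dots> = 0"
    unfolding sum Phi_def by (rule lin_ext_zero)
  finally have Phi_sum: "(\<Sum>k\<in>K. Phi (x k)) = 0" .
  have sum_Phi: "(\<Sum>k\<in>K. Phi (x k) w) = 0" for w
    using sum_apply[of "\<lambda>k. Phi (x k)" K w] Phi_sum by simp
  have "Phi (x k0) w = 0" for w
  proof (cases "length w = k0")
    case True
    have "Phi (x k) w = 0" if "k \<in> K - {k0}" for k
      using Vpow_vanishes_off_length[OF in_Vpow] that True by auto
    then show ?thesis
      using sum_Phi[of w] K k0 by (simp add: sum.remove)
  qed (use Vpow_vanishes_off_length in_Vpow[OF k0] in blast)
  then show "x k0 = 0"
    using Phi_eq_zero_imp in_SSym[OF k0] by (simp add: fun_eq_iff)
qed

theorem mainTheorem10: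
  shows
    "SSym = lspan (\<Union>k. SSymk k)
     \<and> (\<forall>K x. finite K \<longrightarrow> (\<forall>k\<in>K. x k \<in> SSymk k) \<longrightarrow> (\<Sum>k\<in>K. x k) = 0
           \<longrightarrow> (\<forall>k\<in>K. x k = 0))
     \<and> (\<forall>k. \<forall>x\<in>SSymk k. Delta x \<in> lspan (\<Union>i\<in>{0..k}. tensor_sp (SSymk i) (SSymk (k - i))))
     \<and> (\<exists>phi. (\<forall>x\<in>SSym. \<forall>y\<in>SSym. phi (x + y) = phi x + phi y)
            \<and> (\<forall>c. \<forall>x\<in>SSym. phi (scal c x) = scal c (phi x))
            \<and> bij_betw phi SSym (QV (SSymk 1))
            \<and> (\<forall>k. phi ` SSymk k = Vpow (SSymk 1) k)
            \<and> (\<forall>x\<in>SSym. tensor_map phi (Delta x) = DeltaQ (phi x))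
            \<and> (\<forall>x\<in>SSym. counitQ (phi x) = counit x))"
proof (intro conjI exI[of _ Phi] allI ballI impI)
  have "lspan (\<Union>k. SSymk k) = rat_fun.span (\<Union>k. MM ` Sk k)"
    unfolding SSymk_def lspan_eq_span by (rule span_UN_span)
  also have "(\<Union>k. MM ` Sk k) = MM ` {u. is_perm u}"
    unfolding UN_Sk[symmetric] by blast
  finally show "SSym = lspan (\<Union>k. SSymk k)"
    by (simp add: SSym_eq_span_MM)
  show "bij_betw Phi SSym (QV (SSymk 1))"
    unfolding bij_betw_def using inj_on_Phi Phi_SSym by blast
  show "x k = 0" if "finite K" "\<forall>k\<in>K. x k \<in> SSymk k" "(\<Sum>k\<in>K. x k) = 0" "k \<in> K" for K x k
    using SSymk_independent that by blast
qed (simp_all add: Delta_SSymk Phi_add Phi_scal Phi_SSymk tensor_map_Phi_Delta counitQ_Phi)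

end
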